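(* Let $0<\gamma<1$, $1<\alpha<2$, $\lambda\ge0$, $\rho>0$, $\eta\in\mathbb{R}$, $J=\sqrt{-1}$, $p=\rho+J\eta$, $K>0$, $b>0$, $T>0$, $U:[0,b]\to[0,\infty)$, $\widetilde{\lambda}_i=\lambda+pU(x_i)$. Let $G(x,p,t)$ be the exact solution of the time-tempered fractional Feynman–Kac problem described in the context. For integers $M\ge2$, $N\ge1$, $h=b/M$, $\tau>0$ with $N\tau\le T$, $x_i=ih$, $t_n=n\tau$, let $G_{i,p}^n$ be computed by the scheme $$\frac{1}{\tau^\gamma}\sum_{k=0}^{n}l_k^{(2)}e^{-J\eta U(x_i)k\tau}G_{i,p}^{n-k}-\kappa\frac{1}{h^\alpha}\sum_{j=0}^{M}w_{i,j}^\alpha G_{j,p}^n=\frac{1}{\tau^\gamma}\sum_{k=0}^{n}l_k^{2,\gamma}e^{-\widetilde{\lambda}_i n\tau}G_{i,p}^0+f(x_i,p,t_n)$$ for $1\le i\le M-1$, $1\le n\le N$, with $G_{i,p}^0=G(x_i,p,0)$ and $G_{0,p}^n=G_{M,p}^n=0$. Assume the local truncation error $r_i^n$ (the residual obtained by substituting $G(x_j,p,t_m)$ for $G_{j,p}^m$ in the scheme, moved to the right-hand side) satisfies $|r_i^n|\le C_G(\tau^2+h^2)$ for all $i,n$, with $C_G>0$ independent of $\tau,h$. Let $\varepsilon_i^n=G(x_i,p,t_n)-G_{i,p}^n$. Then $$\tau\sum_{n=1}^{N}\|\varepsilon^n\|\le\frac{C_G|\Gamma(1-\alpha)|\,b^{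\alpha+\frac12}T}{2\kappa}(\tau^2+h^2).$$
   Context: The problem: for $x\in(0,b)$, $t\in(0,T]$, $${}_C^SD_t^{\gamma,\widetilde{\lambda}}G(x,p,t)=K\nabla_x^\alpha G(x,p,t)+f(x,p,t),\quad G(x,p,0)=G_0(x,p),\quad G(x,p,t)=0\ \text{for } x\notin(0,b),$$ where $\widetilde{\lambda}=\lambda+pU(x)$, ${}_C^SD_t^{\gamma,\widetilde{\lambda}}G=D_t^{\gamma,\widetilde{\lambda}}\left[G-e^{-\widetilde{\lambda}t}G(x,p,0)\right]-\lambda^\gamma G$ with $D_t^{\gamma,\widetilde{\lambda}}G=\frac{1}{\Gamma(1-\gamma)}\left[\partial_t+\widetilde{\lambda}\right]\int_0^t(t-z)^{-\gamma}e^{-\widetilde{\lambda}(t-z)}G(x,p,z)\,dz$, and $\nabla_x^\alpha=-\kappa_\alpha({}_0D_x^\alpha+{}_xD_b^\alpha)$ is the Riesz derivative built from the left/right Riemann–Liouville derivatives of order $\alpha$. Notation: $\kappa_\alpha=\frac{1}{2\cos(\alpha\pi/2)}$, $\kappa=-K\kappa_\alpha>0$. $g_k^\beta=(-1)^k\binom{\beta}{k}$. $l_k^{2,\gamma}$ are defined by $\left((1-\zeta)+\tfrac12(1-\zeta)^2\right)^{\gamma}=\sum_k l_k^{2,\gamma}\zeta^k$. $l_0^{(2)}=l_0^{2,\gamma}-\left(\sum_{l=1}^{2}\frac1l(1-e^{-\lambda\tau})^l\right)^{\gamma}$ and $l_k^{(2)}=e^{-(\lambda+\rho U(x_i))k\tau}l_k^{2,\gamma}$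 for $k\ge1$. $w_0^\alpha=\frac{\alpha}{2}g_0^\alpha$, $w_k^\alpha=\frac{\alpha}{2}g_k^\alpha+\frac{2-\alpha}{2}g_{k-1}^\alpha$ ($k\ge1$); $w_{i,j}^\alpha=w^\alpha_{i-j+1}$ if $j<i-1$, $w_0^\alpha+w_2^\alpha$ if $j=i\pm1$, $2w_1^\alpha$ if $j=i$, $w^\alpha_{j-i+1}$ if $j>i+1$. $\|\varepsilon^n\|^2=h\sum_{i=1}^{M-1}|\varepsilon_i^n|^2$. *)

theory Defs
  imports "HOL-Analysis.Analysis"
begin

definition g_coef :: "real \<Rightarrow> nat \<Rightarrow> real" where
  "g_coef \<beta> k = (-1) ^ k * (\<beta> gchoose k)"

definition w_coef :: "real \<Rightarrow> nat \<Rightarrow> real" where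
  "w_coef \<alpha> k = (if k = 0 then \<alpha> / 2 * g_coef \<alpha> 0
                   else \<alpha> / 2 * g_coef \<alpha> k + (2 - \<alpha>) / 2 * g_coef \<alpha> (k - 1))"

definition w_mat :: "real \<Rightarrow> nat \<Rightarrow> nat \<Rightarrow> real" where
  "w_mat \<alpha> i j =
     (if j + 1 < i then w_coef \<alpha> (i - j + 1)
      else if j = i + 1 \<or> i = j + 1 then w_coef \<alpha> 0 + w_coef \<alpha> 2
      else if j = i then 2 * w_coef \<alpha> 1
      else w_coef \<alpha> (j - i + 1))"

definition l2_coef :: "real \<Rightarrow> nat \<Rightarrow> real" where
  "l2_coef \<gamma> k =
     (deriv ^^ k) (\<lambda>z. ((1 - z) + (1 - z) ^ 2 / 2) powr \<gamma>) 0 / fact k"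

definition kappa_alpha :: "real \<Rightarrow> real" where
  "kappa_alpha \<alpha> = 1 / (2 * cos (\<alpha> * pi / 2))"

definition kappa :: "real \<Rightarrow> real \<Rightarrow> real" where
  "kappa K \<alpha> = - K * kappa_alpha \<alpha>"

definition grid_x :: "real \<Rightarrow> nat \<Rightarrow> nat \<Rightarrow> real" where
  "grid_x b M i = real i * (b / real M)"

definition lam_tilde :: "real \<Rightarrow> real \<Rightarrow> real \<Rightarrow> (real \<Rightarrow> real) \<Rightarrow> real \<Rightarrow> complex" where
  "lam_tilde lam \<rho> \<eta> U y = complex_of_real lam + Complex \<rho> \<eta> * complex_of_real (U y)"

definition l2_mod :: "real \<Rightarrow> real \<Rightarrow> real \<Rightarrow> real \<Rightarrow> (real \<Rightarrow> real) \<Rightarrow> real \<Rightarrow> nat \<Rightarrow> real" where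
  "l2_mod \<gamma> lam \<rho> \<tau> U y k =
     (if k = 0 then l2_coef \<gamma> 0 - (\<Sum>l=1..(2::nat). (1 - exp (- lam * \<tau>)) ^ l / real l) powr \<gamma>
      else exp (- (lam + \<rho> * U y) * real k * \<tau>) * l2_coef \<gamma> k)"

text \<open>Left-hand side operator of the scheme applied to a grid function V (V j m ~ G_j^m).\<close>
definition scheme_L ::
  "real \<Rightarrow> real \<Rightarrow> real \<Rightarrow> real \<Rightarrow> real \<Rightarrow> real \<Rightarrow> real \<Rightarrow> nat \<Rightarrow> real \<Rightarrow> (real \<Rightarrow> real)
    \<Rightarrow> (nat \<Rightarrow> nat \<Rightarrow> complex) \<Rightarrow> nat \<Rightarrow> nat \<Rightarrow> complex" where
  "scheme_L \<gamma> \<alpha> lam \<rho> \<eta> K b M \<tau> U V i n =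
     complex_of_real (1 / \<tau> powr \<gamma>) *
       (\<Sum>k=0..n. complex_of_real (l2_mod \<gamma> lam \<rho> \<tau> U (grid_x b M i) k)
          * exp (- \<i> * complex_of_real (\<eta> * U (grid_x b M i) * real k * \<tau>)) * V i (n - k))
     - complex_of_real (kappa K \<alpha> / (b / real M) powr \<alpha>) *
       (\<Sum>j=0..M. complex_of_real (w_mat \<alpha> i j) * V j n)"

text \<open>Right-hand side of the scheme, given the initial data V0 j ~ G_j^0.\<close>
definition scheme_R ::
  "real \<Rightarrow> real \<Rightarrow> real \<Rightarrow> real \<Rightarrow> real \<Rightarrow> nat \<Rightarrow> real \<Rightarrow> (real \<Rightarrow> real)
    \<Rightarrow> (real \<Rightarrow> real \<Rightarrow> complex) \<Rightarrow> (nat \<Rightarrow> complex) \<Rightarrow> nat \<Rightarrow> nat \<Rightarrow> complex" where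
  "scheme_R \<gamma> lam \<rho> \<eta> b M \<tau> U f V0 i n =
     complex_of_real (1 / \<tau> powr \<gamma>) *
       (\<Sum>k=0..n. complex_of_real (l2_coef \<gamma> k)
          * exp (- lam_tilde lam \<rho> \<eta> U (grid_x b M i) * complex_of_real (real n * \<tau>)) * V0 i)
     + f (grid_x b M i) (real n * \<tau>)"

definition grid_norm :: "real \<Rightarrow> nat \<Rightarrow> (nat \<Rightarrow> complex) \<Rightarrow> real" where
  "grid_norm b M e = sqrt ((b / real M) * (\<Sum>i=1..M-1. (cmod (e i))\<^sup>2))"

end

theory Submission
  imports Defs "HOL-Complex_Analysis.Complex_Analysis"
begin

text \<open>The error \<open>e = G - Gh\<close> satisfies the scheme with the truncation error as right-hand
  side. Pairing that equation with \<open>cnj e\<close> and summing over nodes and time levels, both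
  discrete operators contribute terms with nonnegative real part. For the time operator this is a
  discrete Herglotz argument: its weights are the Taylor coefficients of
  \<open>((1 - z) (3 - z) / 2) powr \<gamma>\<close>, whose real part on the unit disc dominates the subtracted
  correction \<open>l2_base (exp (- \<lambda> \<tau>)) powr \<gamma>\<close>, so the associated lower triangular Toeplitz
  form is positive semidefinite (seen by sampling at roots of unity). For the space operator, the
  matrix \<open>- w_mat \<alpha>\<close> is symmetric, has nonpositive off-diagonal entries and row sums at least
  \<open>2 M\<^sup>-\<^sup>\<alpha> / \<bar>\<Gamma>(1 - \<alpha>)\<bar>\<close>, by a Gamma function bound on the Gruenwald weights. This
  coercivity, the bound on the truncation error and Cauchy-Schwarz give the estimate.\<close>

section \<open>The generating function of the time weights\<close>

lemma cos_powr_le_cos_mult: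
  fixes g \<theta> :: real
  assumes g: "0 < g" "g < 1" and \<theta>: "\<bar>\<theta>\<bar> < pi / 2"
  shows "cos \<theta> powr g \<le> cos (g * \<theta>)"
proof -
  let ?A = "{-pi/2<..<pi/2}"
  have convex: "convex_on ?A (\<lambda>x. - ln (cos x))"
  proof (rule convex_on_realI[where f' = tan])
    show "connected ?A" by simp
    fix x assume x: "x \<in> ?A"
    have "cos x > 0" using x by (auto intro!: cos_gt_zero_pi)
    then show "((\<lambda>x. - ln (cos x)) has_real_derivative tan x) (at x)"
      by (auto intro!: derivative_eq_intros simp: tan_def)
  next
    fix x y assume "x \<in> ?A" "y \<in> ?A" "x \<le> y"
    then show "tan x \<le> tan y"
      by (cases "x = y") (auto intro!: less_imp_le tan_monotone)
  qed
  have "\<theta> \<in> ?A" "0 \<in> ?A" using \<theta> by auto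
  then have "- ln (cos (g * \<theta> + (1 - g) * 0)) \<le> g * (- ln (cos \<theta>)) + (1 - g) * (- ln (cos 0))"
    using convex_onD[OF convex, of "1 - g" \<theta> 0] g by auto
  then have ln_le: "g * ln (cos \<theta>) \<le> ln (cos (g * \<theta>))" by simp
  have "cos \<theta> > 0" using \<theta> by (auto intro!: cos_gt_zero_pi)
  moreover have "cos (g * \<theta>) > 0"
  proof -
    have "\<bar>g * \<theta>\<bar> \<le> \<bar>\<theta>\<bar>" using g by (simp add: abs_mult mult_left_le_one_le)
    then show ?thesis using \<theta> by (auto intro!: cos_gt_zero_pi)
  qed
  ultimately show ?thesis
    using ln_le by (simp add: powr_def) (metis exp_le_cancel_iff exp_ln)
qed

lemma Re_powr_le_Re_powr:
  fixes z :: complex and g :: real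
  assumes g: "0 < g" "g < 1" and z: "0 < Re z"
  shows "Re z powr g \<le> Re (z powr of_real g)"
proof -
  have z0: "z \<noteq> 0" using z by auto
  let ?t = "Im (Ln z)"
  have t: "\<bar>?t\<bar> < pi / 2" using Re_Ln_pos_lt_imp z by blast
  have "Re z = Re (exp (Ln z))" using z0 by simp
  also have "\<dots> = exp (Re (Ln z)) * cos ?t" by (rule Re_exp)
  also have "\<dots> = norm z * cos ?t" using z0 by (simp add: Re_Ln)
  finally have Re_z: "Re z = norm z * cos ?t" .
  have "cos ?t \<ge> 0" using t by (intro cos_ge_zero) auto
  then have "Re z powr g = norm z powr g * cos ?t powr g"
    by (simp add: Re_z powr_mult)
  also have "\<dots> \<le> norm z powr g * cos (g * ?t)"
    by (intro mult_left_mono cos_powr_le_cos_mult g t) simp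
  also have "\<dots> = Re (z powr of_real g)"
    using z0 by (simp add: powr_def Re_exp)
  finally show ?thesis .
qed

definition l2_base :: "real \<Rightarrow> real" where
  "l2_base r = (1 - r) + (1 - r)\<^sup>2 / 2"

definition l2_symbol :: "real \<Rightarrow> complex \<Rightarrow> complex" where
  "l2_symbol \<gamma> z = ((1 - z) * (3 - z) / 2) powr of_real \<gamma>"

lemma l2_base_pos: "0 \<le> r \<Longrightarrow> r < 1 \<Longrightarrow> 0 < l2_base r"
  unfolding l2_base_def by (simp add: add_pos_nonneg)

lemma l2_base_antimono:
  assumes "0 \<le> r" "r \<le> q" "q \<le> 1"
  shows "l2_base q \<le> l2_base r"
proof -
  have "l2_base r - l2_base q = (q - r) * (4 - q - r) / 2"
    unfolding l2_base_def by (simp add: field_simps power2_eq_square)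
  moreover have "0 \<le> (q - r) * (4 - q - r)" using assms by (intro mult_nonneg_nonneg) auto
  ultimately show ?thesis by simp
qed

lemma l2_base_le_Re:
  fixes w :: complex
  assumes "norm w < 1"
  shows "l2_base (norm w) \<le> Re ((1 - w) * (3 - w) / 2)"
proof -
  define a where "a = Re w"
  define c where "c = Im w"
  define r where "r = norm w"
  have r2: "r\<^sup>2 = a\<^sup>2 + c\<^sup>2" unfolding r_def a_def c_def by (simp add: cmod_power2)
  have "a \<le> r" unfolding a_def r_def by (rule complex_Re_le_cmod)
  moreover have "r < 1" using assms r_def by simp
  ultimately have "0 \<le> (r - a) * (2 - r - a)" by (intro mult_nonneg_nonneg) auto
  moreover have "Re ((1 - w) * (3 - w) / 2) = (3 - 4 * a + a\<^sup>2 - c\<^sup>2) / 2"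
    unfolding a_def c_def by (simp add: algebra_simps power2_eq_square)
  moreover have "l2_base r = (3 - 4 * r + r\<^sup>2) / 2"
    unfolding l2_base_def by (simp add: power2_eq_square field_simps)
  moreover have "(r - a) * (2 - r - a) = 2 * r - r\<^sup>2 - 2 * a + a\<^sup>2"
    by (simp add: algebra_simps power2_eq_square)
  ultimately have "3 - 4 * r + r\<^sup>2 \<le> 3 - 4 * a + a\<^sup>2 - c\<^sup>2" using r2 by linarith
  then show ?thesis unfolding r_def[symmetric] using \<open>l2_base r = _\<close> \<open>Re _ = _\<close>
    by (simp add: divide_right_mono)
qed

lemma l2_symbol_holomorphic: "l2_symbol \<gamma> holomorphic_on ball 0 1"
  unfolding l2_symbol_def
proof (rule holomorphic_on_powr)
  fix z :: complex assume "z \<in> ball 0 1"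
  then have "0 < Re ((1 - z) * (3 - z) / 2)"
    using l2_base_le_Re[of z] l2_base_pos[of "norm z"] by simp
  moreover have "0 < Re u \<Longrightarrow> u \<notin> \<real>\<^sub>\<le>\<^sub>0" for u :: complex
    by (auto simp: nonpos_Reals_def)
  ultimately show "(1 - z) * (3 - z) / 2 \<notin> \<real>\<^sub>\<le>\<^sub>0" by blast
qed (auto intro!: holomorphic_intros)

lemma Re_l2_symbol_ge:
  assumes g: "0 < g" "g < 1" and w: "norm w < 1"
  shows "l2_base (norm w) powr g \<le> Re (l2_symbol g w)"
proof -
  have pos: "0 < l2_base (norm w)" using l2_base_pos[of "norm w"] w by simp
  have le: "l2_base (norm w) \<le> Re ((1 - w) * (3 - w) / 2)" by (rule l2_base_le_Re[OF w])
  then have "l2_base (norm w) powr g \<le> Re ((1 - w) * (3 - w) / 2) powr g"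
    using pos g by (intro powr_mono2) auto
  also have "\<dots> \<le> Re (l2_symbol g w)" unfolding l2_symbol_def
    using pos le by (intro Re_powr_le_Re_powr g) auto
  finally show ?thesis .
qed

lemma l2_symbol_of_real:
  assumes "x \<in> {-1<..<1}"
  shows "l2_symbol g (of_real x) = of_real (l2_base x powr g)"
proof -
  have "(1 - of_real x) * (3 - of_real x) / 2 = (of_real (l2_base x) :: complex)"
    unfolding l2_base_def by (simp add: field_simps power2_eq_square)
  moreover have "0 \<le> l2_base x" using assms unfolding l2_base_def by auto
  ultimately show ?thesis unfolding l2_symbol_def by (simp only: powr_of_real)
qed

lemma higher_deriv_l2_symbol_of_real:
  "x \<in> {-1<..<1} \<Longrightarrow>
     (deriv ^^ k) (l2_symbol g) (of_real x) = of_real ((deriv ^^ k) (\<lambda>y. l2_base y powr g) x)"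
proof (induction k arbitrary: x)
  case 0
  then show ?case using l2_symbol_of_real by simp
next
  case (Suc k)
  define H where "H = (deriv ^^ k) (l2_symbol g)"
  define h where "h = (deriv ^^ k) (\<lambda>y. l2_base y powr g)"
  have "H holomorphic_on ball 0 1" unfolding H_def
    by (intro holomorphic_higher_deriv l2_symbol_holomorphic) auto
  moreover have "of_real x \<in> ball (0::complex) 1" using Suc.prems by auto
  ultimately have "(H has_field_derivative deriv H (of_real x)) (at (of_real x))"
    by (intro holomorphic_derivI[of _ "ball 0 1"]) auto
  then have "((\<lambda>y. H (of_real y)) has_vector_derivative deriv H (of_real x)) (at x)"
    by (rule has_vector_derivative_real_field)
  then have d: "((\<lambda>y. complex_of_real (h y)) has_vector_derivative deriv H (of_real x)) (at x)"
    by (rule has_vector_derivative_transform_within_open[of _ _ _ "{-1<..<1}"])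
       (use Suc in \<open>auto simp: H_def h_def\<close>)
  have "((\<lambda>y. 0::real) has_real_derivative Im (deriv H (of_real x))) (at x)"
    using has_field_derivative_Im[OF d] by simp
  then have "Im (deriv H (of_real x)) = 0"
    using DERIV_unique DERIV_const by blast
  moreover have "deriv h x = Re (deriv H (of_real x))"
    using has_field_derivative_Re[OF d] by (simp add: DERIV_imp_deriv)
  ultimately show ?case by (simp add: H_def h_def complex_eq_iff)
qed

lemma l2_coef_higher_deriv:
  "complex_of_real (l2_coef g k) = (deriv ^^ k) (l2_symbol g) 0 / fact k"
  using higher_deriv_l2_symbol_of_real[of 0 k g]
  by (simp add: l2_coef_def l2_base_def)

lemma l2_symbol_sums:
  "norm w < 1 \<Longrightarrow> (\<lambda>k. complex_of_real (l2_coef g k) * w ^ k) sums l2_symbol g w"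
  using holomorphic_power_series[OF l2_symbol_holomorphic[of g], of w]
  by (simp add: l2_coef_higher_deriv)

lemma summable_norm_l2_series:
  assumes "norm w < 1"
  shows "summable (\<lambda>k. norm (complex_of_real (l2_coef g k) * w ^ k))"
proof -
  define r where "r = (1 + norm w) / 2"
  have r: "norm w < r" "r < 1" using assms unfolding r_def by auto
  have "summable (\<lambda>k. complex_of_real (l2_coef g k) * (of_real r) ^ k)"
    using l2_symbol_sums[of "of_real r" g] r norm_ge_zero[of w] by (auto simp: sums_iff)
  then have "norm (of_real r :: complex) \<le> conv_radius (\<lambda>k. complex_of_real (l2_coef g k))"
    by (rule conv_radius_geI)
  moreover have "ereal (norm w) < ereal (norm (of_real r :: complex))"
    using r norm_ge_zero[of w] by simp
  ultimately have "norm w < conv_radius (\<lambda>k. complex_of_real (l2_coef g k))"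
    by (meson order_less_le_trans)
  then show ?thesis by (rule abs_summable_in_conv_radius)
qed

section \<open>Positive semidefinite Toeplitz forms\<close>

definition unit_root :: "nat \<Rightarrow> complex" where
  "unit_root L = exp (2 * of_real pi * \<i> / of_nat L)"

lemma unit_root_pow: "unit_root L ^ e = exp (2 * of_real pi * \<i> * of_nat e / of_nat L)"
  unfolding unit_root_def by (simp flip: exp_of_nat_mult add: field_simps)

lemma unit_root_pow_self: "L > 0 \<Longrightarrow> unit_root L ^ L = 1"
  unfolding unit_root_pow by (simp add: exp_eq_1)

lemma unit_root_pow_eq_1_iff:
  assumes L: "L > 0"
  shows "unit_root L ^ e = 1 \<longleftrightarrow> L dvd e"
proof
  assume "unit_root L ^ e = 1"
  then obtain n :: int where "2 * pi * real e / real L = of_int (2 * n) * pi"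
    unfolding unit_root_pow exp_eq_1 by auto
  then have "real e = of_int n * real L" using L by (simp add: field_simps)
  then have "int e = n * int L" by (metis of_int_eq_iff of_int_mult of_int_of_nat_eq)
  then have "int L dvd int e" by simp
  then show "L dvd e" by simp
next
  assume "L dvd e"
  then obtain c where "e = L * c" by auto
  then show "unit_root L ^ e = 1" using unit_root_pow_self[OF L] by (simp add: power_mult)
qed

lemma unit_root_pow_pow_self: "L > 0 \<Longrightarrow> (unit_root L ^ j) ^ L = 1"
  by (metis unit_root_pow_self power_mult mult.commute power_one)

lemma norm_unit_root_pow: "norm (unit_root L ^ j) = 1"
  unfolding unit_root_pow by (simp add: norm_exp_eq_Re)

lemma sum_unit_root_powers:
  assumes L: "L > 0"
  shows "(\<Sum>j<L. (unit_root L ^ e) ^ j) = (if L dvd e then of_nat L else 0)"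
proof (cases "L dvd e")
  case True
  then have "unit_root L ^ e = 1" using unit_root_pow_eq_1_iff[OF L] by simp
  then show ?thesis using True by simp
next
  case False
  then have "unit_root L ^ e \<noteq> 1" using unit_root_pow_eq_1_iff[OF L] by simp
  then show ?thesis using False unit_root_pow_pow_self[OF L] by (simp add: sum_gp_strict)
qed

lemma cnj_unit_root_pow:
  assumes L: "L > 0" and n: "n \<le> L"
  shows "cnj (unit_root L ^ j) ^ n = (unit_root L ^ j) ^ (L - n)"
proof -
  define z where "z = unit_root L ^ j"
  have nz: "norm z = 1" unfolding z_def by (rule norm_unit_root_pow)
  then have "cnj z * z = 1" using complex_norm_square[of z] by (simp add: mult.commute)
  then have "cnj z ^ n * z ^ n = 1" by (simp flip: power_mult_distrib)
  moreover have "z ^ (L - n) * z ^ n = 1"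
    using unit_root_pow_pow_self[OF L] n unfolding z_def by (simp flip: power_add)
  ultimately have "cnj z ^ n * z ^ n = z ^ (L - n) * z ^ n" by simp
  moreover have "z \<noteq> 0" using nz by auto
  ultimately show ?thesis unfolding z_def[symmetric] by simp
qed

lemma dvd_shifted_index_iff:
  fixes k m n K N L :: nat
  assumes "k < K" "1 \<le> m" "m \<le> N" "1 \<le> n" "n \<le> N" "L = K + N"
  shows "L dvd (k + (m + (L - n))) \<longleftrightarrow> k + m = n"
proof
  assume "L dvd (k + (m + (L - n)))"
  then obtain c where c: "k + (m + (L - n)) = L * c" by auto
  have "k + (m + (L - n)) > 0" using assms by auto
  then have "c \<noteq> 0" using c by auto
  moreover have "k + (m + (L - n)) < 2 * L" using assms by auto
  then have "c < 2" using c by (metis mult.commute mult_less_cancel2)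
  ultimately have "c = 1" by auto
  then show "k + m = n" using c assms by auto
next
  assume "k + m = n"
  then show "L dvd (k + (m + (L - n)))" using assms by auto
qed

text \<open>Sampling the symbol of a lower triangular Toeplitz form at the \<open>L\<close>-th roots of unity
  recovers the form, as long as \<open>L\<close> exceeds the total index range.\<close>

lemma toeplitz_symbol_sample:
  fixes b x :: "nat \<Rightarrow> complex" and j :: nat
  assumes L: "L > 0" "N \<le> L"
  defines "z \<equiv> unit_root L ^ j"
  shows "(\<Sum>k<K. b k * z ^ k) * ((\<Sum>m=1..N. x m * z ^ m) * cnj (\<Sum>m=1..N. x m * z ^ m))
       = (\<Sum>n=1..N. \<Sum>m=1..N. \<Sum>k<K.
            cnj (x n) * x m * b k * (unit_root L ^ (k + (m + (L - n)))) ^ j)"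
proof -
  have cnj_X: "cnj (\<Sum>m=1..N. x m * z ^ m) = (\<Sum>n=1..N. cnj (x n) * z ^ (L - n))"
    unfolding cnj_sum
  proof (rule sum.cong[OF refl])
    fix n assume "n \<in> {1..N}"
    then have "cnj z ^ n = z ^ (L - n)" using L cnj_unit_root_pow unfolding z_def by auto
    then show "cnj (x n * z ^ n) = cnj (x n) * z ^ (L - n)" by simp
  qed
  have "(\<Sum>k<K. b k * z ^ k) * ((\<Sum>m=1..N. x m * z ^ m) * cnj (\<Sum>m=1..N. x m * z ^ m))
      = (\<Sum>n=1..N. cnj (x n) * z ^ (L - n)) * ((\<Sum>m=1..N. x m * z ^ m) * (\<Sum>k<K. b k * z ^ k))"
    unfolding cnj_X by (simp add: mult_ac)
  also have "\<dots> = (\<Sum>n=1..N. \<Sum>m=1..N. \<Sum>k<K.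
      cnj (x n) * z ^ (L - n) * (x m * z ^ m * (b k * z ^ k)))"
    by (simp only: sum_distrib_right) (simp only: sum_distrib_left)
  also have "\<dots> = (\<Sum>n=1..N. \<Sum>m=1..N. \<Sum>k<K.
            cnj (x n) * x m * b k * (unit_root L ^ (k + (m + (L - n)))) ^ j)"
  proof (intro sum.cong refl)
    fix n m k
    have "z ^ (L - n) * (z ^ m * z ^ k) = (unit_root L ^ (k + (m + (L - n)))) ^ j"
      unfolding z_def
      by (simp add: power_add[symmetric] power_mult[symmetric] mult.commute add_ac add_mult_distrib2)
    then show "cnj (x n) * z ^ (L - n) * (x m * z ^ m * (b k * z ^ k))
        = cnj (x n) * x m * b k * (unit_root L ^ (k + (m + (L - n)))) ^ j"
      by (simp add: mult_ac)
  qed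
  finally show ?thesis .
qed

lemma sum_unit_root_shifted_index:
  assumes "k < K" "m \<in> {1..N}" "n \<in> {1..N}" "L = K + N"
  shows "(\<Sum>j<L. (unit_root L ^ (k + (m + (L - n)))) ^ j) = (if k + m = n then of_nat L else 0)"
  using sum_unit_root_powers[of L "k + (m + (L - n))"] dvd_shifted_index_iff[of k K m N n L] assms
  by auto

lemma toeplitz_form_dft:
  fixes b x :: "nat \<Rightarrow> complex"
  assumes KN: "N \<le> K" and L: "L = K + N" and N: "1 \<le> N"
  shows "(\<Sum>j<L. (\<Sum>k<K. b k * (unit_root L ^ j) ^ k) *
            ((\<Sum>m=1..N. x m * (unit_root L ^ j) ^ m) * cnj (\<Sum>m=1..N. x m * (unit_root L ^ j) ^ m)))
         = of_nat L * (\<Sum>n=1..N. \<Sum>m=1..n. cnj (x n) * b (n - m) * x m)"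
proof -
  define c where "c = (\<lambda>n m. of_nat L * (cnj (x n) * b (n - m) * x m))"
  have "(\<Sum>j<L. (\<Sum>k<K. b k * (unit_root L ^ j) ^ k) *
            ((\<Sum>m=1..N. x m * (unit_root L ^ j) ^ m) * cnj (\<Sum>m=1..N. x m * (unit_root L ^ j) ^ m)))
      = (\<Sum>j<L. \<Sum>n=1..N. \<Sum>m=1..N. \<Sum>k<K.
            cnj (x n) * x m * b k * (unit_root L ^ (k + (m + (L - n)))) ^ j)"
    using L N by (intro sum.cong refl toeplitz_symbol_sample) auto
  also have "\<dots> = (\<Sum>n=1..N. \<Sum>m=1..N. \<Sum>k<K. \<Sum>j<L.
            cnj (x n) * x m * b k * (unit_root L ^ (k + (m + (L - n)))) ^ j)"
    by (subst sum.swap, rule sum.cong[OF refl], subst sum.swap,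
        rule sum.cong[OF refl], rule sum.swap)
  also have "\<dots> = (\<Sum>n=1..N. \<Sum>m=1..N. \<Sum>k<K. if k = n - m \<and> m \<le> n then c n m else 0)"
  proof (intro sum.cong refl)
    fix n m k assume "n \<in> {1..N}" "m \<in> {1..N}" "k \<in> {..<K}"
    then show "(\<Sum>j<L. cnj (x n) * x m * b k * (unit_root L ^ (k + (m + (L - n)))) ^ j)
        = (if k = n - m \<and> m \<le> n then c n m else 0)"
      using sum_unit_root_shifted_index[of k K m N n L] L
      by (auto simp: c_def mult_ac simp flip: sum_distrib_left)
  qed
  also have "\<dots> = (\<Sum>n=1..N. \<Sum>m=1..N. if m \<le> n then c n m else 0)"
    using KN by (intro sum.cong refl) (auto simp: sum.delta)
  also have "\<dots> = (\<Sum>n=1..N. \<Sum>m=1..n. c n m)"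
  proof (rule sum.cong[OF refl])
    fix n assume "n \<in> {1..N}"
    then have "{m \<in> {1..N}. m \<le> n} = {1..n}" by auto
    then show "(\<Sum>m=1..N. if m \<le> n then c n m else 0) = (\<Sum>m=1..n. c n m)"
      by (simp add: sum.inter_filter[symmetric])
  qed
  finally show ?thesis by (simp add: c_def sum_distrib_left)
qed

lemma Re_partial_sum_ge_neg_tail:
  fixes b :: "nat \<Rightarrow> complex" and z :: complex
  assumes summ: "summable (\<lambda>k. norm (b k))" and z: "norm z = 1"
    and pos: "0 \<le> Re (\<Sum>k. b k * z ^ k)"
  shows "- (\<Sum>i. norm (b (i + K))) \<le> Re (\<Sum>k<K. b k * z ^ k)"
proof -
  have nb: "norm (b k * z ^ k) = norm (b k)" for k using z by (simp add: norm_mult norm_power)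
  have s1: "summable (\<lambda>k. norm (b k * z ^ k))" using summ by (simp add: nb)
  define T where "T = (\<Sum>i. b (i + K) * z ^ (i + K))"
  have "(\<Sum>k. b k * z ^ k) = T + (\<Sum>k<K. b k * z ^ k)"
    unfolding T_def using suminf_split_initial_segment[OF summable_norm_cancel[OF s1]] .
  then have "0 \<le> Re T + Re (\<Sum>k<K. b k * z ^ k)" using pos by simp
  moreover have "Re T \<le> (\<Sum>i. norm (b (i + K)))"
  proof -
    have "Re T \<le> norm T" by (rule complex_Re_le_cmod)
    also have "\<dots> \<le> (\<Sum>i. norm (b (i + K) * z ^ (i + K)))"
      unfolding T_def by (rule summable_norm[OF summable_ignore_initial_segment[OF s1]])
    finally show ?thesis by (simp add: nb)
  qed
  ultimately show ?thesis by linarith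
qed

lemma toeplitz_form_Re_ge_neg_tail:
  fixes b x :: "nat \<Rightarrow> complex"
  assumes summ: "summable (\<lambda>k. norm (b k))"
    and pos: "\<And>z. norm z = 1 \<Longrightarrow> 0 \<le> Re (\<Sum>k. b k * z ^ k)"
    and N: "1 \<le> N" "N \<le> K"
  shows "- (\<Sum>i. norm (b (i + K))) * (\<Sum>m=1..N. norm (x m))\<^sup>2
           \<le> Re (\<Sum>n=1..N. \<Sum>m=1..n. cnj (x n) * b (n - m) * x m)"
proof -
  define Q where "Q = (\<Sum>n=1..N. \<Sum>m=1..n. cnj (x n) * b (n - m) * x m)"
  define S where "S = (\<Sum>m=1..N. norm (x m))"
  define t where "t = (\<Sum>i. norm (b (i + K)))"
  define L where "L = K + N"
  define P where "P = (\<lambda>j. \<Sum>k<K. b k * (unit_root L ^ j) ^ k)"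
  define X where "X = (\<lambda>j. \<Sum>m=1..N. x m * (unit_root L ^ j) ^ m)"
  have t: "0 \<le> t" unfolding t_def
    by (intro suminf_nonneg summable_ignore_initial_segment[OF summ]) simp
  have term_ge: "- t * S\<^sup>2 \<le> Re (P j * (X j * cnj (X j)))" for j
  proof -
    have "norm (X j) \<le> (\<Sum>m=1..N. norm (x m * (unit_root L ^ j) ^ m))"
      unfolding X_def by (rule norm_sum)
    also have "\<dots> = S" unfolding S_def
      using norm_unit_root_pow[of L 1] by (simp add: norm_mult norm_power)
    finally have "- t * S\<^sup>2 \<le> - t * (norm (X j))\<^sup>2"
      using t by (intro mult_left_mono_neg power_mono) auto
    also have "\<dots> \<le> Re (P j) * (norm (X j))\<^sup>2"
      using Re_partial_sum_ge_neg_tail[OF summ norm_unit_root_pow pos[OF norm_unit_root_pow]]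
      unfolding P_def t_def by (intro mult_right_mono) auto
    also have "\<dots> = Re (P j * (X j * cnj (X j)))" by (simp flip: complex_norm_square)
    finally show ?thesis .
  qed
  have "real L * (- t * S\<^sup>2) \<le> (\<Sum>j<L. Re (P j * (X j * cnj (X j))))"
    using sum_mono[OF term_ge, of "{..<L}"] by simp
  also have "\<dots> = Re (\<Sum>j<L. P j * (X j * cnj (X j)))" by (simp only: Re_sum)
  also have "\<dots> = Re (of_nat L * Q)"
    unfolding P_def X_def Q_def toeplitz_form_dft[OF N(2) L_def N(1)] ..
  also have "\<dots> = real L * Re Q" by simp
  finally have "real L * (- t * S\<^sup>2) \<le> real L * Re Q" .
  moreover have "0 < real L" using N L_def by simp
  ultimately have "- t * S\<^sup>2 \<le> Re Q" using mult_le_cancel_left_pos by blast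
  then show ?thesis unfolding Q_def S_def t_def .
qed

lemma toeplitz_form_Re_nonneg:
  fixes b x :: "nat \<Rightarrow> complex"
  assumes summ: "summable (\<lambda>k. norm (b k))"
    and pos: "\<And>z. norm z = 1 \<Longrightarrow> 0 \<le> Re (\<Sum>k. b k * z ^ k)"
  shows "0 \<le> Re (\<Sum>n=1..N. \<Sum>m=1..n. cnj (x n) * b (n - m) * x m)"
proof (cases "N = 0")
  case False
  let ?bound = "\<lambda>K. - (\<Sum>i. norm (b (i + K))) * (\<Sum>m=1..N. norm (x m))\<^sup>2"
  have "?bound \<longlonglongrightarrow> - 0 * (\<Sum>m=1..N. norm (x m))\<^sup>2"
    by (intro tendsto_intros suminf_exist_split2 summ)
  moreover have "eventually (\<lambda>K. ?bound K \<le> Re (\<Sum>n=1..N. \<Sum>m=1..n. cnj (x n) * b (n - m) * x m))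
      sequentially"
    using eventually_ge_at_top[of N]
  proof eventually_elim
    case (elim K)
    then show ?case using False by (intro toeplitz_form_Re_ge_neg_tail[OF summ pos]) auto
  qed
  ultimately have "- 0 * (\<Sum>m=1..N. norm (x m))\<^sup>2
      \<le> Re (\<Sum>n=1..N. \<Sum>m=1..n. cnj (x n) * b (n - m) * x m)"
    by (rule tendsto_upperbound) simp
  then show ?thesis by (simp only: minus_zero mult_zero_left)
qed simp

section \<open>The time operator\<close>

text \<open>With \<open>q = exp (- \<lambda> \<tau>)\<close> and \<open>z = exp (- (\<lambda> + p U(x\<^sub>i)) \<tau>)\<close>, the value
  \<open>time_coef \<gamma> q z k\<close> is the weight \<open>l\<^sub>k\<^sup>(\<^sup>2\<^sup>) exp (- J \<eta> U(x\<^sub>i) k \<tau>)\<close> of the scheme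
  at the node \<open>x\<^sub>i\<close> (lemma \<open>l2_mod_phase_eq_time_coef\<close>).\<close>

definition time_coef :: "real \<Rightarrow> real \<Rightarrow> complex \<Rightarrow> nat \<Rightarrow> complex" where
  "time_coef \<gamma> q z k =
     (if k = 0 then of_real (l2_coef \<gamma> 0 - l2_base q powr \<gamma>) else of_real (l2_coef \<gamma> k) * z ^ k)"

lemma time_coef_mult_power: "time_coef \<gamma> q z k * w ^ k = time_coef \<gamma> q (z * w) k"
  unfolding time_coef_def by (simp add: power_mult_distrib)

lemma time_coef_sums:
  assumes "norm z < 1"
  shows "time_coef \<gamma> q z sums (l2_symbol \<gamma> z - of_real (l2_base q powr \<gamma>))"
proof -
  have "(\<lambda>k. of_real (l2_coef \<gamma> k) * z ^ k - (if k = 0 then of_real (l2_base q powr \<gamma>) else 0))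
      sums (l2_symbol \<gamma> z - of_real (l2_base q powr \<gamma>))"
    by (intro sums_diff l2_symbol_sums[OF assms] sums_single)
  moreover have "(\<lambda>k. of_real (l2_coef \<gamma> k) * z ^ k - (if k = 0 then of_real (l2_base q powr \<gamma>) else 0))
      = time_coef \<gamma> q z"
    by (auto simp: time_coef_def)
  ultimately show ?thesis by simp
qed

lemma summable_norm_time_coef:
  assumes "norm z < 1"
  shows "summable (\<lambda>k. norm (time_coef \<gamma> q z k))"
proof (rule summable_comparison_test'
    [of "\<lambda>k. norm (of_real (l2_coef \<gamma> k) * z ^ k) + (if k = 0 then \<bar>l2_base q powr \<gamma>\<bar> else 0)" 0])
  show "summable (\<lambda>k. norm (of_real (l2_coef \<gamma> k) * z ^ k) + (if k = 0 then \<bar>l2_base q powr \<gamma>\<bar> else 0))"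
    by (intro summable_add summable_norm_l2_series[OF assms] summable_If_finite_set) simp
next
  fix k
  show "norm (norm (time_coef \<gamma> q z k))
      \<le> norm (of_real (l2_coef \<gamma> k) * z ^ k) + (if k = 0 then \<bar>l2_base q powr \<gamma>\<bar> else 0)"
    using abs_triangle_ineq4[of "l2_coef \<gamma> 0" "l2_base q powr \<gamma>"]
    by (auto simp: time_coef_def simp del: of_real_diff)
qed

lemma Re_time_symbol_nonneg:
  assumes \<gamma>: "0 < \<gamma>" "\<gamma> < 1" and q: "q \<le> 1" and z: "norm z \<le> q" "norm z < 1"
  shows "0 \<le> Re (l2_symbol \<gamma> z - of_real (l2_base q powr \<gamma>))"
proof -
  have "l2_base q \<le> l2_base (norm z)" using q z by (intro l2_base_antimono) auto
  moreover have "0 \<le> l2_base q" using q unfolding l2_base_def by simp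
  ultimately have "l2_base q powr \<gamma> \<le> l2_base (norm z) powr \<gamma>" using \<gamma> by (intro powr_mono2) auto
  then show ?thesis using Re_l2_symbol_ge[OF \<gamma> z(2)] by simp
qed

lemma time_form_Re_nonneg_disc:
  fixes x :: "nat \<Rightarrow> complex"
  assumes \<gamma>: "0 < \<gamma>" "\<gamma> < 1" and q: "q \<le> 1" and z: "norm z \<le> q" "norm z < 1"
  shows "0 \<le> Re (\<Sum>n=1..N. \<Sum>m=1..n. cnj (x n) * time_coef \<gamma> q z (n - m) * x m)"
proof (rule toeplitz_form_Re_nonneg[OF summable_norm_time_coef[OF z(2)]])
  fix u :: complex assume u: "norm u = 1"
  then have zu: "norm (z * u) \<le> q" "norm (z * u) < 1" using z by (simp_all add: norm_mult)
  have "(\<lambda>k. time_coef \<gamma> q z k * u ^ k) sums (l2_symbol \<gamma> (z * u) - of_real (l2_base q powr \<gamma>))"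
    unfolding time_coef_mult_power by (rule time_coef_sums[OF zu(2)])
  then show "0 \<le> Re (\<Sum>k. time_coef \<gamma> q z k * u ^ k)"
    using Re_time_symbol_nonneg[OF \<gamma> q zu] by (simp add: sums_iff)
qed

text \<open>Letting the damping factor \<open>r\<close> tend to \<open>1\<close> removes the strict inequality \<open>norm z < 1\<close>
  needed for the power series of the symbol.\<close>

lemma time_form_Re_nonneg:
  fixes x :: "nat \<Rightarrow> complex"
  assumes \<gamma>: "0 < \<gamma>" "\<gamma> < 1" and q: "0 < q" "q \<le> 1" and z: "norm z \<le> q" and x0: "x 0 = 0"
  shows "0 \<le> Re (\<Sum>n=1..N. cnj (x n) * (\<Sum>k=0..n. time_coef \<gamma> q z k * x (n - k)))"
proof -
  define F where "F = (\<lambda>r::real. Re (\<Sum>n=1..N. \<Sum>m=1..n.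
      cnj (x n) * (time_coef \<gamma> q z (n - m) * of_real r ^ (n - m)) * x m))"
  have "continuous_on UNIV F" unfolding F_def by (intro continuous_intros)
  then have "(F \<longlongrightarrow> F 1) (at_left 1)"
    by (simp add: continuous_on_def tendsto_mono[OF at_le[OF subset_UNIV]])
  moreover have "eventually (\<lambda>r. r \<in> {0<..<1}) (at_left (1::real))"
    by (rule eventually_at_left_real) simp
  then have "eventually (\<lambda>r. 0 \<le> F r) (at_left (1::real))"
  proof eventually_elim
    case (elim r)
    then have r: "0 < r" "r < 1" by auto
    have "norm z * r \<le> norm z" "norm z * r \<le> 1 * r"
      using r z q by (auto intro: mult_left_le mult_right_mono)
    moreover have "norm (z * of_real r) = norm z * r" using elim by (simp add: norm_mult)
    ultimately have "norm (z * of_real r) \<le> q" "norm (z * of_real r) < 1"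
      using r z by linarith+
    then show ?case unfolding F_def time_coef_mult_power mult.assoc[symmetric]
      by (rule time_form_Re_nonneg_disc[OF \<gamma> q(2)])
  qed
  ultimately have "0 \<le> F 1" by (rule tendsto_lowerbound) simp
  moreover have "(\<Sum>k=0..n. time_coef \<gamma> q z k * x (n - k)) = (\<Sum>m=1..n. time_coef \<gamma> q z (n - m) * x m)"
    for n
  proof -
    have "(\<Sum>k=0..n. time_coef \<gamma> q z k * x (n - k)) = (\<Sum>m=0..n. time_coef \<gamma> q z (n - m) * x m)"
      by (rule sum.reindex_bij_witness[where i="\<lambda>m. n - m" and j="\<lambda>k. n - k"]) auto
    then show ?thesis using x0 by (simp add: sum.atLeast_Suc_atMost)
  qed
  ultimately show ?thesis by (simp add: F_def sum_distrib_left mult_ac)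
qed

lemma l2_mod_phase_eq_time_coef:
  fixes \<gamma> lam \<rho> \<eta> \<tau> y :: real and U :: "real \<Rightarrow> real"
  shows "complex_of_real (l2_mod \<gamma> lam \<rho> \<tau> U y k) * exp (- \<i> * complex_of_real (\<eta> * U y * real k * \<tau>))
    = time_coef \<gamma> (exp (- lam * \<tau>))
        (of_real (exp (- (lam + \<rho> * U y) * \<tau>)) * exp (- \<i> * of_real (\<eta> * U y * \<tau>))) k"
proof (cases "k = 0")
  case True
  have "(\<Sum>l=1..(2::nat). (1 - exp (- lam * \<tau>)) ^ l / real l) = l2_base (exp (- lam * \<tau>))"
    unfolding l2_base_def by (simp add: numeral_2_eq_2 sum.atLeast_Suc_atMost power2_eq_square)
  then show ?thesis using True unfolding l2_mod_def time_coef_def by simp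
next
  case False
  have "exp (- (lam + \<rho> * U y) * real k * \<tau>) = exp (- (lam + \<rho> * U y) * \<tau>) ^ k"
    by (simp flip: exp_of_nat_mult add: mult_ac)
  moreover have "exp (- \<i> * complex_of_real (\<eta> * U y * real k * \<tau>))
      = exp (- \<i> * complex_of_real (\<eta> * U y * \<tau>)) ^ k"
    by (simp flip: exp_of_nat_mult add: mult_ac)
  ultimately show ?thesis
    using False unfolding l2_mod_def time_coef_def by (simp add: power_mult_distrib)
qed

section \<open>Gruenwald weights and the space operator\<close>

lemma g_coef_pochhammer: "g_coef a k = pochhammer (- a) k / fact k"
  unfolding g_coef_def gbinomial_pochhammer by (simp flip: power_mult_distrib)

lemma sum_g_coef: "(\<Sum>k=0..m. g_coef a k) = g_coef (a - 1) m"
proof (induction m)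
  case 0
  then show ?case by (simp add: g_coef_def)
next
  case (Suc m)
  have "a gchoose Suc m = ((a - 1) gchoose m) + ((a - 1) gchoose Suc m)"
    using gbinomial_Suc_Suc[of "a - 1" m] by simp
  then have "g_coef a (Suc m) = - g_coef (a - 1) m + g_coef (a - 1) (Suc m)"
    unfolding g_coef_def by (simp add: algebra_simps)
  then show ?case using Suc by simp
qed

lemma g_coef_nonneg:
  fixes \<alpha> :: real
  assumes "1 < \<alpha>" "\<alpha> < 2" "2 \<le> k"
  shows "0 \<le> g_coef \<alpha> k"
proof -
  obtain j where k: "k = Suc (Suc j)" using assms(3) by (metis add_2_eq_Suc le_Suc_ex)
  have "pochhammer (- \<alpha>) k = (- \<alpha>) * ((1 - \<alpha>) * pochhammer (2 - \<alpha>) j)"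
    unfolding k pochhammer_rec by (simp add: algebra_simps)
  moreover have "0 < pochhammer (2 - \<alpha>) j" using assms by (intro pochhammer_pos) simp
  moreover have "0 \<le> (- \<alpha>) * (1 - \<alpha>)" using assms by (intro mult_nonpos_nonpos) auto
  ultimately have "0 \<le> pochhammer (- \<alpha>) k"
    by (metis mult.assoc mult_nonneg_nonneg less_imp_le)
  then show ?thesis unfolding g_coef_pochhammer by simp
qed

lemma g_coef_pred_neg:
  fixes \<alpha> :: real
  assumes "1 < \<alpha>" "\<alpha> < 2" "1 \<le> m"
  shows "g_coef (\<alpha> - 1) m < 0"
proof -
  obtain j where m: "m = Suc j" using assms(3) by (cases m) auto
  have "pochhammer (- (\<alpha> - 1)) m = (1 - \<alpha>) * pochhammer (2 - \<alpha>) j"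
    unfolding m pochhammer_rec by (simp add: algebra_simps)
  moreover have "0 < pochhammer (2 - \<alpha>) j" using assms by (intro pochhammer_pos) simp
  ultimately have "pochhammer (- (\<alpha> - 1)) m < 0" using assms by (simp add: mult_neg_pos)
  then show ?thesis unfolding g_coef_pochhammer by (simp add: divide_neg_pos)
qed

lemma g_coef_pred_mono:
  fixes \<alpha> :: real
  assumes "1 < \<alpha>" "\<alpha> < 2" "2 \<le> m"
  shows "g_coef (\<alpha> - 1) (m - 1) \<le> g_coef (\<alpha> - 1) m"
proof -
  obtain j where m: "m = Suc j" and j: "1 \<le> j" using assms(3) by (cases m) auto
  have "g_coef (\<alpha> - 1) m = g_coef (\<alpha> - 1) j * ((1 - \<alpha> + j) / (j + 1))"
    unfolding m g_coef_pochhammer pochhammer_Suc by (simp add: field_simps)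
  moreover have "g_coef (\<alpha> - 1) j < 0" using g_coef_pred_neg assms j by simp
  moreover have "0 \<le> (1 - \<alpha> + j) / (j + 1)" "(1 - \<alpha> + j) / (j + 1) \<le> 1"
    using assms j by (auto simp: field_simps)
  ultimately have "0 \<le> g_coef (\<alpha> - 1) j * ((1 - \<alpha> + j) / (j + 1) - 1)"
    by (intro mult_nonpos_nonpos) auto
  then have "g_coef (\<alpha> - 1) j \<le> g_coef (\<alpha> - 1) j * ((1 - \<alpha> + j) / (j + 1))"
    by (simp add: algebra_simps)
  then have "g_coef (\<alpha> - 1) j \<le> g_coef (\<alpha> - 1) m" using \<open>g_coef (\<alpha> - 1) m = _\<close> by simp
  then show ?thesis using m by simp
qed

lemma one_minus_notin_nonpos_Ints:
  fixes \<alpha> :: real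
  assumes "1 < \<alpha>" "\<alpha> < 2"
  shows "1 - \<alpha> \<notin> \<int>\<^sub>\<le>\<^sub>0"
proof
  assume "1 - \<alpha> \<in> \<int>\<^sub>\<le>\<^sub>0"
  then obtain n :: int where n: "1 - \<alpha> = of_int n" by (auto elim!: nonpos_Ints_cases)
  then have "-1 < n" "n < 0" using assms by linarith+
  then show False by simp
qed

lemma Gamma_one_minus_neg:
  fixes \<alpha> :: real
  assumes "1 < \<alpha>" "\<alpha> < 2"
  shows "Gamma (1 - \<alpha>) < 0"
proof -
  have "Gamma (1 - \<alpha> + 1) = (1 - \<alpha>) * Gamma (1 - \<alpha>)"
    by (rule Gamma_plus1[OF one_minus_notin_nonpos_Ints[OF assms]])
  moreover have "0 < Gamma (1 - \<alpha> + 1)" using assms by (intro Gamma_real_pos) simp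
  ultimately have "0 < (1 - \<alpha>) * Gamma (1 - \<alpha>)" by simp
  then show ?thesis using assms by (simp add: zero_less_mult_iff)
qed

lemma ln_fact_le_Gamma_interpolation:
  fixes \<alpha> :: real and m :: nat
  assumes "0 \<le> \<alpha>" "\<alpha> < real m + 1"
  shows "(1 + \<alpha>) * ln (fact m) \<le> ln (Gamma (real m + 1 - \<alpha>)) + \<alpha> * ln (Gamma (real m + 2))"
proof -
  define th where "th = 1 / (1 + \<alpha>)"
  have th: "0 < th" "th \<le> 1" "th * (1 + \<alpha>) = 1" using assms unfolding th_def by auto
  have "(ln \<circ> Gamma) ((1 - (1 - th)) *\<^sub>R (real m + 1 - \<alpha>) + (1 - th) *\<^sub>R (real m + 2))
      \<le> (1 - (1 - th)) * (ln \<circ> Gamma) (real m + 1 - \<alpha>) + (1 - th) * (ln \<circ> Gamma) (real m + 2)"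
    using th assms by (intro convex_onD[OF log_convex_Gamma_real]) auto
  moreover have "(1 - (1 - th)) *\<^sub>R (real m + 1 - \<alpha>) + (1 - th) *\<^sub>R (real m + 2) = real m + 1"
    using th(3) by (simp add: algebra_simps)
  moreover have "Gamma (real m + 1) = fact m" using Gamma_fact[of m] by (simp add: add.commute)
  ultimately have "ln (fact m) \<le> th * ln (Gamma (real m + 1 - \<alpha>)) + (1 - th) * ln (Gamma (real m + 2))"
    by simp
  then have "(1 + \<alpha>) * ln (fact m)
      \<le> (1 + \<alpha>) * (th * ln (Gamma (real m + 1 - \<alpha>)) + (1 - th) * ln (Gamma (real m + 2)))"
    using assms by (intro mult_left_mono) auto
  also have "\<dots> = (th * (1 + \<alpha>)) * ln (Gamma (real m + 1 - \<alpha>))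
      + ((1 + \<alpha>) - th * (1 + \<alpha>)) * ln (Gamma (real m + 2))"
    by (simp add: algebra_simps)
  also have "\<dots> = ln (Gamma (real m + 1 - \<alpha>)) + \<alpha> * ln (Gamma (real m + 2))"
    unfolding th(3) by simp
  finally show ?thesis .
qed

lemma fact_le_Gamma_mult_powr:
  fixes \<alpha> :: real and m :: nat
  assumes "0 \<le> \<alpha>" "\<alpha> < real m + 1"
  shows "fact m \<le> Gamma (real m + 1 - \<alpha>) * (real m + 1) powr \<alpha>"
proof -
  have Gamma_pos: "0 < Gamma (real m + 1 - \<alpha>)" using assms by (intro Gamma_real_pos) simp
  have "Gamma (real m + 1 + 1) = (real m + 1) * Gamma (real m + 1)"
    by (rule Gamma_plus1) (metis of_nat_Suc of_nat_in_nonpos_Ints_iff nat.distinct(1) add.commute)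
  then have "Gamma (real m + 2) = (real m + 1) * fact m"
    using Gamma_fact[of m] by (simp add: add.commute add.left_commute)
  then have "ln (Gamma (real m + 2)) = ln (real m + 1) + ln (fact m)" by (simp add: ln_mult)
  then have "ln (fact m) \<le> ln (Gamma (real m + 1 - \<alpha>)) + \<alpha> * ln (real m + 1)"
    using ln_fact_le_Gamma_interpolation[OF assms] by (simp add: algebra_simps)
  also have "\<dots> = ln (Gamma (real m + 1 - \<alpha>) * (real m + 1) powr \<alpha>)"
    using Gamma_pos by (simp add: ln_mult ln_powr)
  finally show ?thesis using Gamma_pos by (simp add: ln_le_cancel_iff)
qed

lemma g_coef_pred_lower_bound:
  fixes \<alpha> :: real and m :: nat
  assumes "1 < \<alpha>" "\<alpha> < 2" "1 \<le> m"
  shows "(real m + 1) powr (- \<alpha>) / \<bar>Gamma (1 - \<alpha>)\<bar> \<le> - g_coef (\<alpha> - 1) m"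
proof -
  have \<Gamma>: "Gamma (1 - \<alpha>) < 0" by (rule Gamma_one_minus_neg[OF assms(1,2)])
  have "fact m \<le> Gamma (real m + 1 - \<alpha>) * (real m + 1) powr \<alpha>"
    using assms by (intro fact_le_Gamma_mult_powr) auto
  then have "1 / (real m + 1) powr \<alpha> \<le> Gamma (real m + 1 - \<alpha>) / fact m"
    by (simp add: field_simps)
  then have "(real m + 1) powr (- \<alpha>) / \<bar>Gamma (1 - \<alpha>)\<bar>
      \<le> Gamma (real m + 1 - \<alpha>) / fact m / \<bar>Gamma (1 - \<alpha>)\<bar>"
    unfolding powr_minus inverse_eq_divide by (rule divide_right_mono) simp
  also have "\<dots> = - g_coef (\<alpha> - 1) m"
    using pochhammer_Gamma[OF one_minus_notin_nonpos_Ints[OF assms(1,2)], of m] \<Gamma>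
    unfolding g_coef_pochhammer by (simp add: field_simps)
  finally show ?thesis .
qed

definition w_partial_sum :: "real \<Rightarrow> nat \<Rightarrow> real" where
  "w_partial_sum \<alpha> m = (\<Sum>k=0..m. w_coef \<alpha> k)"

lemma w_partial_sum_eq:
  "w_partial_sum \<alpha> m = \<alpha> / 2 * g_coef (\<alpha> - 1) m + (2 - \<alpha>) / 2 * (if m = 0 then 0 else g_coef (\<alpha> - 1) (m - 1))"
proof (induction m)
  case 0
  then show ?case by (simp add: w_partial_sum_def w_coef_def g_coef_def)
next
  case (Suc m)
  have G1: "g_coef (\<alpha> - 1) (Suc m) = g_coef (\<alpha> - 1) m + g_coef \<alpha> (Suc m)"
    using sum_g_coef[of \<alpha> "Suc m"] sum_g_coef[of \<alpha> m] by simp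
  have G2: "g_coef (\<alpha> - 1) m = (if m = 0 then 0 else g_coef (\<alpha> - 1) (m - 1)) + g_coef \<alpha> m"
  proof (cases m)
    case 0
    then show ?thesis using sum_g_coef[of \<alpha> 0] by simp
  next
    case (Suc m')
    then show ?thesis using sum_g_coef[of \<alpha> m] sum_g_coef[of \<alpha> m'] by simp
  qed
  have "w_partial_sum \<alpha> (Suc m) = w_partial_sum \<alpha> m + w_coef \<alpha> (Suc m)" by (simp add: w_partial_sum_def)
  also have "\<dots> = \<alpha> / 2 * g_coef (\<alpha> - 1) (Suc m) + (2 - \<alpha>) / 2 * g_coef (\<alpha> - 1) m"
    unfolding Suc w_coef_def using G1 G2 by (simp add: algebra_simps)
  finally show ?case by simp
qed

lemma neg_g_coef_pred_le_w_partial_sum: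
  fixes \<alpha> :: real
  assumes \<alpha>: "1 < \<alpha>" "\<alpha> < 2" and m: "1 \<le> m"
  shows "- g_coef (\<alpha> - 1) m \<le> - w_partial_sum \<alpha> m + (if m = 1 then w_coef \<alpha> 0 else 0)"
proof (cases "m = 1")
  case True
  have G1: "g_coef (\<alpha> - 1) 1 = 1 - \<alpha>" by (simp add: g_coef_def)
  have G0: "g_coef (\<alpha> - 1) 0 = 1" by (simp add: g_coef_def)
  have w0: "w_coef \<alpha> 0 = \<alpha> / 2" by (simp add: w_coef_def g_coef_def)
  have P1: "w_partial_sum \<alpha> 1 = \<alpha> / 2 * (1 - \<alpha>) + (2 - \<alpha>) / 2"
    using w_partial_sum_eq[of \<alpha> 1] G1 G0 by simp
  have "- w_partial_sum \<alpha> 1 + w_coef \<alpha> 0 - (- g_coef (\<alpha> - 1) 1) = \<alpha> * (\<alpha> - 1) / 2"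
    unfolding P1 w0 G1 by (simp add: field_simps)
  moreover have "0 \<le> \<alpha> * (\<alpha> - 1) / 2" using \<alpha> by simp
  ultimately show ?thesis using True by simp
next
  case False
  then have m2: "2 \<le> m" using m by simp
  have "g_coef (\<alpha> - 1) (m - 1) \<le> g_coef (\<alpha> - 1) m" by (rule g_coef_pred_mono[OF \<alpha> m2])
  then have "\<alpha> / 2 * g_coef (\<alpha> - 1) m + (2 - \<alpha>) / 2 * g_coef (\<alpha> - 1) (m - 1)
      \<le> \<alpha> / 2 * g_coef (\<alpha> - 1) m + (2 - \<alpha>) / 2 * g_coef (\<alpha> - 1) m"
    using \<alpha> by (intro add_left_mono mult_left_mono) auto
  moreover have "\<alpha> / 2 * g_coef (\<alpha> - 1) m + (2 - \<alpha>) / 2 * g_coef (\<alpha> - 1) m = g_coef (\<alpha> - 1) m"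
    by (simp add: field_simps)
  moreover have "w_partial_sum \<alpha> m = \<alpha> / 2 * g_coef (\<alpha> - 1) m + (2 - \<alpha>) / 2 * g_coef (\<alpha> - 1) (m - 1)"
    using w_partial_sum_eq[of \<alpha> m] m by simp
  ultimately show ?thesis using False by simp
qed

definition w_half :: "real \<Rightarrow> nat \<Rightarrow> nat \<Rightarrow> real" where
  "w_half \<alpha> i j = (if j \<le> i + 1 then w_coef \<alpha> (i + 1 - j) else 0)"

lemma w_mat_eq_w_half: "w_mat \<alpha> i j = w_half \<alpha> i j + w_half \<alpha> j i"
  unfolding w_mat_def w_half_def by (auto simp: Suc_diff_le numeral_2_eq_2)

lemma sum_reverse:
  fixes f :: "nat \<Rightarrow> 'a::comm_monoid_add"
  shows "1 \<le> n \<Longrightarrow> (\<Sum>j=1..n. f (n - j)) = (\<Sum>k=0..n - 1. f k)"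
  by (rule sum.reindex_bij_witness[where i="\<lambda>k. n - k" and j="\<lambda>j. n - j"]) auto

lemma sum_w_half_row:
  assumes i: "1 \<le> i" "i \<le> M - 1"
  shows "(\<Sum>j=1..M-1. w_half \<alpha> i j) = w_partial_sum \<alpha> i - (if i = M - 1 then w_coef \<alpha> 0 else 0)"
proof -
  have "(\<Sum>j=1..M-1. w_half \<alpha> i j) = (\<Sum>j\<in>{j\<in>{1..M-1}. j \<le> i + 1}. w_coef \<alpha> (i + 1 - j))"
    unfolding w_half_def by (rule sum.inter_filter[symmetric]) simp
  show ?thesis
  proof (cases "i = M - 1")
    case True
    have s: "{j\<in>{1..M-1}. j \<le> i + 1} = {1..i}" using True by auto
    have "(\<Sum>j=1..i. w_coef \<alpha> (i + 1 - j)) = (\<Sum>j=1..i. (\<lambda>k. w_coef \<alpha> (k + 1)) (i - j))"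
      by (intro sum.cong refl) (simp add: Suc_diff_le)
    also have "\<dots> = (\<Sum>k=0..i - 1. w_coef \<alpha> (k + 1))" by (rule sum_reverse) (use i in simp)
    also have "\<dots> = (\<Sum>k=1..i. w_coef \<alpha> k)"
      using i by (intro sum.reindex_bij_witness[where i="\<lambda>k. k - 1" and j="\<lambda>k. k + 1"]) auto
    also have "\<dots> = w_partial_sum \<alpha> i - w_coef \<alpha> 0"
      unfolding w_partial_sum_def by (simp add: sum.atLeast_Suc_atMost)
    finally show ?thesis using True \<open>(\<Sum>j=1..M-1. w_half \<alpha> i j) = _\<close> s by simp
  next
    case False
    have s: "{j\<in>{1..M-1}. j \<le> i + 1} = {1..i+1}" using False i by auto
    have "(\<Sum>j=1..i+1. w_coef \<alpha> (i + 1 - j)) = (\<Sum>k=0..i. w_coef \<alpha> k)"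
      using sum_reverse[of "i + 1" "w_coef \<alpha>"] by simp
    then show ?thesis using False \<open>(\<Sum>j=1..M-1. w_half \<alpha> i j) = _\<close> s unfolding w_partial_sum_def by simp
  qed
qed

lemma sum_w_half_col:
  assumes i: "1 \<le> i" "i \<le> M - 1"
  shows "(\<Sum>j=1..M-1. w_half \<alpha> j i) = w_partial_sum \<alpha> (M - i) - (if i = 1 then w_coef \<alpha> 0 else 0)"
proof -
  have e: "(\<Sum>j=1..M-1. w_half \<alpha> j i) = (\<Sum>j\<in>{j\<in>{1..M-1}. i \<le> j + 1}. w_coef \<alpha> (j + 1 - i))"
    unfolding w_half_def by (rule sum.inter_filter[symmetric]) simp
  show ?thesis
  proof (cases "i = 1")
    case True
    have s: "{j\<in>{1..M-1}. i \<le> j + 1} = {1..M-1}" using True by auto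
    have "(\<Sum>j=1..M-1. w_coef \<alpha> (j + 1 - i)) = (\<Sum>j=1..M-1. w_coef \<alpha> j)" using True by simp
    also have "\<dots> = w_partial_sum \<alpha> (M - 1) - w_coef \<alpha> 0"
      unfolding w_partial_sum_def by (simp add: sum.atLeast_Suc_atMost)
    finally show ?thesis using True e s by simp
  next
    case False
    have s: "{j\<in>{1..M-1}. i \<le> j + 1} = {i-1..M-1}" using False i by auto
    have "(\<Sum>j=i-1..M-1. w_coef \<alpha> (j + 1 - i)) = (\<Sum>k=0..M-i. w_coef \<alpha> k)"
      using i False by (intro sum.reindex_bij_witness[where i="\<lambda>k. k + i - 1" and j="\<lambda>j. j + 1 - i"]) auto
    then show ?thesis using False e s unfolding w_partial_sum_def by simp
  qed
qed

lemma Re_cnj_mult_of_real_self: "Re (cnj u * of_real a * u) = a * (norm u)\<^sup>2"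
proof -
  have "cnj u * of_real a * u = of_real (a * (norm u)\<^sup>2)"
    by (simp add: mult_ac flip: complex_norm_square)
  then show ?thesis by (simp only: Re_complex_of_real)
qed

lemma Re_cnj_mult_of_real_ge:
  fixes u v :: complex
  assumes "a \<le> 0"
  shows "a * ((norm u)\<^sup>2 + (norm v)\<^sup>2) / 2 \<le> Re (cnj u * of_real a * v)"
proof -
  have "Re (cnj u * v) \<le> norm u * norm v"
    using complex_Re_le_cmod[of "cnj u * v"] by (simp add: norm_mult)
  also have "\<dots> \<le> ((norm u)\<^sup>2 + (norm v)\<^sup>2) / 2"
    using sum_squares_bound[of "norm u" "norm v"] by (simp add: field_simps power2_eq_square)
  finally have "a * (((norm u)\<^sup>2 + (norm v)\<^sup>2) / 2) \<le> a * Re (cnj u * v)"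
    using assms by (rule mult_left_mono_neg)
  then show ?thesis by (simp add: algebra_simps)
qed

text \<open>The cross terms are estimated by AM-GM, which is where the sign condition off the diagonal
  enters; symmetry then collects both halves into the row sums.\<close>

lemma Re_quadratic_form_ge_row_sums:
  fixes a :: "nat \<Rightarrow> nat \<Rightarrow> real" and x :: "nat \<Rightarrow> complex"
  assumes sym: "\<And>i j. a i j = a j i"
    and off: "\<And>i j. i \<in> I \<Longrightarrow> j \<in> I \<Longrightarrow> i \<noteq> j \<Longrightarrow> a i j \<le> 0"
  shows "(\<Sum>i\<in>I. (\<Sum>j\<in>I. a i j) * (norm (x i))\<^sup>2)
          \<le> Re (\<Sum>i\<in>I. \<Sum>j\<in>I. cnj (x i) * of_real (a i j) * x j)"
proof -
  have "(\<Sum>i\<in>I. (\<Sum>j\<in>I. a i j) * (norm (x i))\<^sup>2)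
      = ((\<Sum>i\<in>I. \<Sum>j\<in>I. a i j * (norm (x i))\<^sup>2) + (\<Sum>i\<in>I. \<Sum>j\<in>I. a i j * (norm (x j))\<^sup>2)) / 2"
    by (subst (2) sum.swap) (simp add: sym sum_distrib_right)
  also have "\<dots> = (\<Sum>i\<in>I. \<Sum>j\<in>I. a i j * ((norm (x i))\<^sup>2 + (norm (x j))\<^sup>2) / 2)"
    by (simp add: sum.distrib distrib_left add_divide_distrib sum_divide_distrib)
  also have "\<dots> \<le> (\<Sum>i\<in>I. \<Sum>j\<in>I. Re (cnj (x i) * of_real (a i j) * x j))"
  proof (intro sum_mono)
    fix i j assume ij: "i \<in> I" "j \<in> I"
    show "a i j * ((norm (x i))\<^sup>2 + (norm (x j))\<^sup>2) / 2 \<le> Re (cnj (x i) * of_real (a i j) * x j)"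
    proof (cases "i = j")
      case True
      then show ?thesis by (simp only: Re_cnj_mult_of_real_self) simp
    next
      case False
      then show ?thesis using off ij by (intro Re_cnj_mult_of_real_ge) auto
    qed
  qed
  finally show ?thesis by simp
qed

lemma w_mat_sym: "w_mat \<alpha> i j = w_mat \<alpha> j i"
  by (simp add: w_mat_eq_w_half)

lemma w_coef_nonneg:
  fixes \<alpha> :: real assumes "1 < \<alpha>" "\<alpha> < 2" "3 \<le> k"
  shows "0 \<le> w_coef \<alpha> k"
proof -
  have "0 \<le> g_coef \<alpha> k" "0 \<le> g_coef \<alpha> (k - 1)" using assms by (auto intro!: g_coef_nonneg)
  then show ?thesis unfolding w_coef_def using assms by auto
qed

lemma w_mat_offdiag_nonneg:
  fixes \<alpha> :: real assumes \<alpha>: "1 < \<alpha>" "\<alpha> < 2" and ij: "i \<noteq> j"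
  shows "0 \<le> w_mat \<alpha> i j"
proof -
  have w02: "0 \<le> w_coef \<alpha> 0 + w_coef \<alpha> 2"
  proof -
    have g1: "g_coef \<alpha> 1 = - \<alpha>" by (simp add: g_coef_def)
    have g2: "g_coef \<alpha> 2 = \<alpha> * (\<alpha> - 1) / 2"
      by (simp add: g_coef_pochhammer numeral_2_eq_2 pochhammer_Suc field_simps)
    have "w_coef \<alpha> 0 + w_coef \<alpha> 2 = \<alpha> / 2 + (\<alpha> / 2 * (\<alpha> * (\<alpha> - 1) / 2) + (2 - \<alpha>) / 2 * (- \<alpha>))"
      using g1 g2 by (simp add: w_coef_def g_coef_def)
    also have "\<dots> = \<alpha> * (\<alpha> - 1) * (\<alpha> + 2) / 4" by (simp add: field_simps)
    finally have "w_coef \<alpha> 0 + w_coef \<alpha> 2 = \<alpha> * (\<alpha> - 1) * (\<alpha> + 2) / 4" .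
    moreover have "0 \<le> \<alpha> * (\<alpha> - 1) * (\<alpha> + 2)" using \<alpha> by (intro mult_nonneg_nonneg) auto
    ultimately show ?thesis by simp
  qed
  show ?thesis unfolding w_mat_def using ij w02 w_coef_nonneg[OF \<alpha>] by auto
qed

lemma w_mat_row_sum_bound:
  fixes \<alpha> :: real
  assumes \<alpha>: "1 < \<alpha>" "\<alpha> < 2" and M: "2 \<le> M" and i: "1 \<le> i" "i \<le> M - 1"
  shows "2 * real M powr (- \<alpha>) / \<bar>Gamma (1 - \<alpha>)\<bar> \<le> - (\<Sum>j=1..M-1. w_mat \<alpha> i j)"
proof -
  define P where "P = (\<lambda>m. - w_partial_sum \<alpha> m + (if m = 1 then w_coef \<alpha> 0 else 0))"
  have "(\<Sum>j=1..M-1. w_mat \<alpha> i j) = (\<Sum>j=1..M-1. w_half \<alpha> i j) + (\<Sum>j=1..M-1. w_half \<alpha> j i)"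
    by (simp add: w_mat_eq_w_half sum.distrib)
  then have row: "- (\<Sum>j=1..M-1. w_mat \<alpha> i j) = P i + P (M - i)"
    using sum_w_half_row[OF i] sum_w_half_col[OF i] i M unfolding P_def by auto
  have bound: "real M powr (- \<alpha>) / \<bar>Gamma (1 - \<alpha>)\<bar> \<le> P m" if m: "1 \<le> m" "m + 1 \<le> M" for m
  proof -
    have "real M powr (- \<alpha>) \<le> (real m + 1) powr (- \<alpha>)"
      using m \<alpha> by (intro powr_mono2') auto
    then have "real M powr (- \<alpha>) / \<bar>Gamma (1 - \<alpha>)\<bar> \<le> (real m + 1) powr (- \<alpha>) / \<bar>Gamma (1 - \<alpha>)\<bar>"
      by (intro divide_right_mono) auto
    also have "\<dots> \<le> - g_coef (\<alpha> - 1) m" by (rule g_coef_pred_lower_bound[OF \<alpha> m(1)])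
    also have "\<dots> \<le> P m" unfolding P_def by (rule neg_g_coef_pred_le_w_partial_sum[OF \<alpha> m(1)])
    finally show ?thesis .
  qed
  have "real M powr (- \<alpha>) / \<bar>Gamma (1 - \<alpha>)\<bar> \<le> P i"
    "real M powr (- \<alpha>) / \<bar>Gamma (1 - \<alpha>)\<bar> \<le> P (M - i)"
    using i M by (auto intro!: bound)
  then show ?thesis unfolding row by simp
qed

lemma w_mat_form_ge:
  fixes \<alpha> :: real and x :: "nat \<Rightarrow> complex"
  assumes \<alpha>: "1 < \<alpha>" "\<alpha> < 2" and M: "2 \<le> M"
  shows "2 * real M powr (- \<alpha>) / \<bar>Gamma (1 - \<alpha>)\<bar> * (\<Sum>i=1..M-1. (norm (x i))\<^sup>2)
     \<le> Re (\<Sum>i=1..M-1. \<Sum>j=1..M-1. cnj (x i) * of_real (- w_mat \<alpha> i j) * x j)"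
proof -
  define c where "c = 2 * real M powr (- \<alpha>) / \<bar>Gamma (1 - \<alpha>)\<bar>"
  have "c * (\<Sum>i=1..M-1. (norm (x i))\<^sup>2) \<le> (\<Sum>i=1..M-1. (\<Sum>j=1..M-1. - w_mat \<alpha> i j) * (norm (x i))\<^sup>2)"
    unfolding sum_distrib_left
  proof (rule sum_mono)
    fix i assume "i \<in> {1..M-1}"
    then have "c \<le> (\<Sum>j=1..M-1. - w_mat \<alpha> i j)"
      using w_mat_row_sum_bound[OF \<alpha> M, of i] unfolding c_def by (simp add: sum_negf)
    then show "c * (norm (x i))\<^sup>2 \<le> (\<Sum>j=1..M-1. - w_mat \<alpha> i j) * (norm (x i))\<^sup>2"
      by (intro mult_right_mono) auto
  qed
  also have "\<dots> \<le> Re (\<Sum>i=1..M-1. \<Sum>j=1..M-1. cnj (x i) * of_real (- w_mat \<alpha> i j) * x j)"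
    by (rule Re_quadratic_form_ge_row_sums) (auto simp: w_mat_sym intro: w_mat_offdiag_nonneg[OF \<alpha>])
  finally show ?thesis unfolding c_def .
qed

section \<open>The energy estimate\<close>

lemma kappa_pos:
  assumes "1 < \<alpha>" "\<alpha> < 2" "0 < K"
  shows "0 < kappa K \<alpha>"
proof -
  have "0 < cos (pi - \<alpha> * pi / 2)"
    using assms by (intro cos_gt_zero_pi) (auto simp: field_simps)
  then have "cos (\<alpha> * pi / 2) < 0" by (simp add: cos_diff)
  then have "K / (2 * cos (\<alpha> * pi / 2)) < 0" using assms by (intro divide_pos_neg) auto
  then show ?thesis unfolding kappa_def kappa_alpha_def by simp
qed

lemma energy_identity:
  fixes e r T :: "nat \<Rightarrow> nat \<Rightarrow> complex" and W :: "nat \<Rightarrow> nat \<Rightarrow> real"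
  assumes scheme: "\<And>i n. i \<in> I \<Longrightarrow> n \<in> {1..N} \<Longrightarrow>
           r i n = of_real ct * T i n - of_real cs * (\<Sum>j\<in>I. of_real (W i j) * e j n)"
  shows "Re (\<Sum>n=1..N. \<Sum>i\<in>I. cnj (e i n) * r i n)
      = ct * (\<Sum>i\<in>I. Re (\<Sum>n=1..N. cnj (e i n) * T i n))
        + cs * (\<Sum>n=1..N. Re (\<Sum>i\<in>I. \<Sum>j\<in>I. cnj (e i n) * of_real (- W i j) * e j n))"
proof -
  let ?Y = "\<lambda>n. \<Sum>i\<in>I. \<Sum>j\<in>I. cnj (e i n) * of_real (- W i j) * e j n"
  have Re_lin: "Re (of_real a * z + of_real b * w) = a * Re z + b * Re w" for a b :: real and z w
    by simp
  have "(\<Sum>n=1..N. \<Sum>i\<in>I. cnj (e i n) * r i n)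
      = (\<Sum>n=1..N. \<Sum>i\<in>I. of_real ct * (cnj (e i n) * T i n)
            + of_real cs * (\<Sum>j\<in>I. cnj (e i n) * of_real (- W i j) * e j n))"
  proof (intro sum.cong refl)
    fix n i assume "n \<in> {1..N}" "i \<in> I"
    then show "cnj (e i n) * r i n = of_real ct * (cnj (e i n) * T i n)
        + of_real cs * (\<Sum>j\<in>I. cnj (e i n) * of_real (- W i j) * e j n)"
      by (simp add: scheme sum_distrib_left sum_negf algebra_simps)
  qed
  also have "\<dots> = of_real ct * (\<Sum>n=1..N. \<Sum>i\<in>I. cnj (e i n) * T i n) + of_real cs * (\<Sum>n=1..N. ?Y n)"
    by (simp only: sum.distrib sum_distrib_left)
  also have "(\<Sum>n=1..N. \<Sum>i\<in>I. cnj (e i n) * T i n) = (\<Sum>i\<in>I. \<Sum>n=1..N. cnj (e i n) * T i n)"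
    by (rule sum.swap)
  finally show ?thesis
    by (simp only: Re_lin Re_sum[of "\<lambda>i. \<Sum>n=1..N. cnj (e i n) * T i n" I]
        Re_sum[of ?Y "{1..N}"])
qed

lemma Re_sum_cnj_mult_le:
  fixes e r :: "nat \<Rightarrow> nat \<Rightarrow> complex"
  assumes "\<And>i n. i \<in> I \<Longrightarrow> n \<in> J \<Longrightarrow> norm (r i n) \<le> \<delta>"
  shows "Re (\<Sum>n\<in>J. \<Sum>i\<in>I. cnj (e i n) * r i n) \<le> \<delta> * (\<Sum>n\<in>J. \<Sum>i\<in>I. norm (e i n))"
proof -
  have "Re (\<Sum>n\<in>J. \<Sum>i\<in>I. cnj (e i n) * r i n) \<le> (\<Sum>n\<in>J. \<Sum>i\<in>I. norm (cnj (e i n) * r i n))"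
    by (rule order_trans[OF complex_Re_le_cmod order_trans[OF norm_sum sum_mono[OF norm_sum]]])
  also have "\<dots> \<le> (\<Sum>n\<in>J. \<Sum>i\<in>I. \<delta> * norm (e i n))"
  proof (intro sum_mono)
    fix n i assume "n \<in> J" "i \<in> I"
    with assms have "norm (e i n) * norm (r i n) \<le> norm (e i n) * \<delta>"
      by (intro mult_left_mono) auto
    then show "norm (cnj (e i n) * r i n) \<le> \<delta> * norm (e i n)"
      by (simp add: norm_mult mult.commute)
  qed
  finally show ?thesis by (simp add: sum_distrib_left)
qed

lemma energy_inequality:
  fixes e r T :: "nat \<Rightarrow> nat \<Rightarrow> complex" and W :: "nat \<Rightarrow> nat \<Rightarrow> real"
  assumes ct: "0 \<le> ct" and cs: "0 \<le> cs"
    and scheme: "\<And>i n. i \<in> I \<Longrightarrow> n \<in> {1..N} \<Longrightarrow>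
           r i n = of_real ct * T i n - of_real cs * (\<Sum>j\<in>I. of_real (W i j) * e j n)"
    and time: "\<And>i. i \<in> I \<Longrightarrow> 0 \<le> Re (\<Sum>n=1..N. cnj (e i n) * T i n)"
    and space: "\<And>n. c * (\<Sum>i\<in>I. (norm (e i n))\<^sup>2)
                      \<le> Re (\<Sum>i\<in>I. \<Sum>j\<in>I. cnj (e i n) * of_real (- W i j) * e j n)"
    and residual: "\<And>i n. i \<in> I \<Longrightarrow> n \<in> {1..N} \<Longrightarrow> norm (r i n) \<le> \<delta>"
  shows "cs * c * (\<Sum>n=1..N. \<Sum>i\<in>I. (norm (e i n))\<^sup>2) \<le> \<delta> * (\<Sum>n=1..N. \<Sum>i\<in>I. norm (e i n))"
proof -
  let ?Y = "\<lambda>n. \<Sum>i\<in>I. \<Sum>j\<in>I. cnj (e i n) * of_real (- W i j) * e j n"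
  have "0 \<le> ct * (\<Sum>i\<in>I. Re (\<Sum>n=1..N. cnj (e i n) * T i n))"
    using ct time by (simp add: sum_nonneg)
  moreover have "cs * c * (\<Sum>n=1..N. \<Sum>i\<in>I. (norm (e i n))\<^sup>2) \<le> cs * (\<Sum>n=1..N. Re (?Y n))"
  proof -
    have "(\<Sum>n=1..N. c * (\<Sum>i\<in>I. (norm (e i n))\<^sup>2)) \<le> (\<Sum>n=1..N. Re (?Y n))"
      by (intro sum_mono space)
    then have "c * (\<Sum>n=1..N. \<Sum>i\<in>I. (norm (e i n))\<^sup>2) \<le> (\<Sum>n=1..N. Re (?Y n))"
      by (simp only: sum_distrib_left)
    from mult_left_mono[OF this cs] show ?thesis by (simp only: mult.assoc)
  qed
  moreover have "Re (\<Sum>n=1..N. \<Sum>i\<in>I. cnj (e i n) * r i n)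
      = ct * (\<Sum>i\<in>I. Re (\<Sum>n=1..N. cnj (e i n) * T i n)) + cs * (\<Sum>n=1..N. Re (?Y n))"
    using scheme by (rule energy_identity)
  moreover have "Re (\<Sum>n=1..N. \<Sum>i\<in>I. cnj (e i n) * r i n) \<le> \<delta> * (\<Sum>n=1..N. \<Sum>i\<in>I. norm (e i n))"
    using residual by (rule Re_sum_cnj_mult_le)
  ultimately show ?thesis by linarith
qed

lemma sum_sqrt_le_of_energy_inequality:
  fixes e :: "nat \<Rightarrow> nat \<Rightarrow> complex"
  assumes \<mu>: "0 < \<mu>" and \<delta>: "0 \<le> \<delta>"
    and energy: "\<mu> * (\<Sum>n=1..N. \<Sum>i\<in>I. (norm (e i n))\<^sup>2) \<le> \<delta> * (\<Sum>n=1..N. \<Sum>i\<in>I. norm (e i n))"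
  shows "(\<Sum>n=1..N. sqrt (\<Sum>i\<in>I. (norm (e i n))\<^sup>2)) \<le> real N * \<delta> * sqrt (card I) / \<mu>"
proof -
  define E where "E = (\<lambda>n. \<Sum>i\<in>I. (norm (e i n))\<^sup>2)"
  define S where "S = (\<Sum>n=1..N. sqrt (E n))"
  have E: "0 \<le> E n" for n unfolding E_def by (simp add: sum_nonneg)
  have "(\<Sum>i\<in>I. norm (e i n)) \<le> sqrt (card I) * sqrt (E n)" for n
  proof -
    have "(\<Sum>i\<in>I. norm (e i n))\<^sup>2 \<le> E n * real (card I)"
      unfolding E_def by (rule sum_squared_le_sum_of_squares)
    then have "(\<Sum>i\<in>I. norm (e i n)) \<le> sqrt (E n * real (card I))" by (rule real_le_rsqrt)
    then show ?thesis by (simp add: real_sqrt_mult mult.commute)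
  qed
  then have "(\<Sum>n=1..N. \<Sum>i\<in>I. norm (e i n)) \<le> sqrt (card I) * S"
    unfolding S_def sum_distrib_left by (intro sum_mono)
  then have "\<mu> * (\<Sum>n=1..N. E n) \<le> \<delta> * sqrt (card I) * S"
    using energy mult_left_mono[OF _ \<delta>] unfolding E_def by (smt (verit) mult.assoc)
  moreover have "S\<^sup>2 \<le> real N * (\<Sum>n=1..N. E n)"
  proof -
    have "S\<^sup>2 \<le> (\<Sum>n=1..N. (sqrt (E n))\<^sup>2) * real (card {1..N})"
      unfolding S_def by (rule sum_squared_le_sum_of_squares)
    then show ?thesis using E by (simp add: mult.commute)
  qed
  ultimately have "\<mu> * S\<^sup>2 \<le> real N * (\<delta> * sqrt (card I) * S)"
    using \<mu> by (smt (verit) mult_left_mono mult.left_commute of_nat_0_le_iff)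
  moreover have S: "0 \<le> S" unfolding S_def using E by (simp add: sum_nonneg)
  ultimately have "\<mu> * S \<le> real N * \<delta> * sqrt (card I)"
    by (cases "S = 0") (use \<delta> in \<open>auto simp: power2_eq_square mult_ac\<close>)
  then show ?thesis using \<mu> unfolding S_def E_def by (simp add: field_simps)
qed

lemma scheme_L_diff:
  "scheme_L \<gamma> \<alpha> lam \<rho> \<eta> K b M \<tau> U V1 i n - scheme_L \<gamma> \<alpha> lam \<rho> \<eta> K b M \<tau> U V2 i n
   = scheme_L \<gamma> \<alpha> lam \<rho> \<eta> K b M \<tau> U (\<lambda>j m. V1 j m - V2 j m) i n"
  unfolding scheme_L_def by (simp add: sum_subtractf algebra_simps)

lemma sum_atLeastAtMost_drop_ends:
  fixes F :: "nat \<Rightarrow> 'a::comm_monoid_add"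
  assumes "1 \<le> M" "F 0 = 0" "F M = 0"
  shows "(\<Sum>j=0..M. F j) = (\<Sum>j=1..M-1. F j)"
proof -
  obtain M' where M': "M = Suc M'" using assms by (cases M) auto
  then show ?thesis using assms by (simp add: sum.atLeast_Suc_atMost sum.cl_ivl_Suc)
qed

lemma scheme_L_eq_time_coef:
  assumes "1 \<le> M" "V 0 n = 0" "V M n = 0"
  shows "scheme_L \<gamma> \<alpha> lam \<rho> \<eta> K b M \<tau> U V i n
    = of_real (1 / \<tau> powr \<gamma>) * (\<Sum>k=0..n. time_coef \<gamma> (exp (- lam * \<tau>))
          (of_real (exp (- (lam + \<rho> * U (grid_x b M i)) * \<tau>))
            * exp (- \<i> * of_real (\<eta> * U (grid_x b M i) * \<tau>))) k * V i (n - k))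
      - of_real (kappa K \<alpha> / (b / real M) powr \<alpha>) * (\<Sum>j=1..M-1. of_real (w_mat \<alpha> i j) * V j n)"
  using sum_atLeastAtMost_drop_ends[of M "\<lambda>j. of_real (w_mat \<alpha> i j) * V j n"] assms
  unfolding scheme_L_def l2_mod_phase_eq_time_coef[symmetric] by simp

lemma scheme_stability:
  fixes e :: "nat \<Rightarrow> nat \<Rightarrow> complex"
  assumes \<gamma>: "0 < \<gamma>" "\<gamma> < 1" and \<alpha>: "1 < \<alpha>" "\<alpha> < 2" and lam: "0 \<le> lam" and \<rho>: "0 \<le> \<rho>"
    and K: "0 < K" and b: "0 < b" and M: "2 \<le> M" and \<tau>: "0 < \<tau>" and \<delta>: "0 \<le> \<delta>"
    and U: "\<And>i. i \<in> {1..M-1} \<Longrightarrow> 0 \<le> U (grid_x b M i)"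
    and init: "\<And>i. i \<in> {1..M-1} \<Longrightarrow> e i 0 = 0"
    and boundary: "\<And>n. n \<in> {1..N} \<Longrightarrow> e 0 n = 0 \<and> e M n = 0"
    and residual: "\<And>i n. i \<in> {1..M-1} \<Longrightarrow> n \<in> {1..N} \<Longrightarrow>
                     norm (scheme_L \<gamma> \<alpha> lam \<rho> \<eta> K b M \<tau> U e i n) \<le> \<delta>"
  shows "(\<Sum>n=1..N. sqrt (\<Sum>i=1..M-1. (norm (e i n))\<^sup>2))
           \<le> real N * sqrt (real (M - 1)) * (\<delta> * \<bar>Gamma (1 - \<alpha>)\<bar> * b powr \<alpha> / (2 * kappa K \<alpha>))"
proof -
  define q where "q = exp (- lam * \<tau>)"
  define z where "z = (\<lambda>i. of_real (exp (- (lam + \<rho> * U (grid_x b M i)) * \<tau>))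
                          * exp (- \<i> * of_real (\<eta> * U (grid_x b M i) * \<tau>)))"
  define cs where "cs = kappa K \<alpha> / (b / real M) powr \<alpha>"
  define c where "c = 2 * real M powr (- \<alpha>) / \<bar>Gamma (1 - \<alpha>)\<bar>"
  have \<kappa>: "0 < kappa K \<alpha>" using kappa_pos \<alpha> K by blast
  have \<Gamma>: "0 < \<bar>Gamma (1 - \<alpha>)\<bar>" using Gamma_one_minus_neg \<alpha> by force
  have q: "0 < q" "q \<le> 1" unfolding q_def using lam \<tau> by auto
  have z: "norm (z i) \<le> q" if "i \<in> {1..M-1}" for i
  proof -
    have "0 \<le> \<rho> * U (grid_x b M i) * \<tau>" using U[OF that] \<rho> \<tau> by simp
    then show ?thesis unfolding z_def q_def by (simp add: norm_mult algebra_simps)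
  qed
  have "cs * c * (\<Sum>n=1..N. \<Sum>i\<in>{1..M-1}. (norm (e i n))\<^sup>2)
      \<le> \<delta> * (\<Sum>n=1..N. \<Sum>i\<in>{1..M-1}. norm (e i n))"
  proof (rule energy_inequality[where ct = "1 / \<tau> powr \<gamma>" and W = "w_mat \<alpha>"])
    fix i n assume "i \<in> {1..M-1}" "n \<in> {1..N}"
    then show "scheme_L \<gamma> \<alpha> lam \<rho> \<eta> K b M \<tau> U e i n
        = of_real (1 / \<tau> powr \<gamma>) * (\<Sum>k=0..n. time_coef \<gamma> q (z i) k * e i (n - k))
          - of_real cs * (\<Sum>j\<in>{1..M-1}. of_real (w_mat \<alpha> i j) * e j n)"
      using M boundary unfolding q_def z_def cs_def by (intro scheme_L_eq_time_coef) auto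
  next
    fix i assume "i \<in> {1..M-1}"
    then show "0 \<le> Re (\<Sum>n=1..N. cnj (e i n) * (\<Sum>k=0..n. time_coef \<gamma> q (z i) k * e i (n - k)))"
      using init z by (intro time_form_Re_nonneg[OF \<gamma> q]) auto
  next
    fix n
    show "c * (\<Sum>i\<in>{1..M-1}. (norm (e i n))\<^sup>2)
        \<le> Re (\<Sum>i\<in>{1..M-1}. \<Sum>j\<in>{1..M-1}. cnj (e i n) * of_real (- w_mat \<alpha> i j) * e j n)"
      unfolding c_def by (rule w_mat_form_ge[OF \<alpha> M])
  qed (use residual \<tau> \<kappa> b in \<open>auto simp: cs_def\<close>)
  then have "(\<Sum>n=1..N. sqrt (\<Sum>i=1..M-1. (norm (e i n))\<^sup>2))
      \<le> real N * \<delta> * sqrt (real (card {1..M-1})) / (cs * c)"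
    using \<kappa> b M \<Gamma> \<delta> unfolding cs_def c_def
    by (intro sum_sqrt_le_of_energy_inequality mult_pos_pos divide_pos_pos) auto
  also have "cs * c = 2 * kappa K \<alpha> / (\<bar>Gamma (1 - \<alpha>)\<bar> * b powr \<alpha>)"
  proof -
    have "(b / real M) powr \<alpha> * real M powr \<alpha> = b powr \<alpha>"
      using b M by (simp flip: powr_mult)
    then show ?thesis using b M \<Gamma> unfolding cs_def c_def
      by (simp add: powr_minus field_simps)
  qed
  finally show ?thesis using \<kappa> \<Gamma> by (simp add: field_simps)
qed

lemma time_sum_grid_norm_le:
  fixes e :: "nat \<Rightarrow> nat \<Rightarrow> complex"
  assumes b: "0 < b" and M: "1 \<le> M" and \<tau>: "0 < \<tau>" and T: "real N * \<tau> \<le> T" and B: "0 \<le> B"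
    and bound: "(\<Sum>n=1..N. sqrt (\<Sum>i=1..M-1. (norm (e i n))\<^sup>2)) \<le> real N * sqrt (real (M - 1)) * B"
  shows "\<tau> * (\<Sum>n=1..N. grid_norm b M (\<lambda>i. e i n)) \<le> T * sqrt b * B"
proof -
  have T0: "0 \<le> T" using T \<tau> by (meson order_trans mult_nonneg_nonneg of_nat_0_le_iff less_imp_le)
  have "\<tau> * (\<Sum>n=1..N. grid_norm b M (\<lambda>i. e i n))
      = \<tau> * sqrt (b / real M) * (\<Sum>n=1..N. sqrt (\<Sum>i=1..M-1. (norm (e i n))\<^sup>2))"
    unfolding grid_norm_def real_sqrt_mult by (simp only: sum_distrib_left mult.assoc)
  also have "\<dots> \<le> \<tau> * sqrt (b / real M) * (real N * sqrt (real (M - 1)) * B)"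
    using bound \<tau> b by (intro mult_left_mono) auto
  also have "\<dots> = (real N * \<tau>) * sqrt (b / real M * real (M - 1)) * B"
    by (simp only: real_sqrt_mult mult_ac)
  also have "\<dots> \<le> T * sqrt (b / real M * real M) * B"
    using T T0 b M B by (intro mult_mono real_sqrt_le_mono) auto
  also have "\<dots> = T * sqrt b * B" using M by simp
  finally show ?thesis .
qed

theorem theorem3p10:
  fixes \<gamma> \<alpha> lam \<rho> \<eta> K b T \<tau> C\<^sub>G :: real
    and M N :: nat
    and U :: "real \<Rightarrow> real"
    and G :: "real \<Rightarrow> real \<Rightarrow> complex"
    and f :: "real \<Rightarrow> real \<Rightarrow> complex"
    and Gh :: "nat \<Rightarrow> nat \<Rightarrow> complex"
  assumes "0 < \<gamma>" "\<gamma> < 1" "1 < \<alpha>" "\<alpha> < 2" "0 \<le> lam" "0 < \<rho>"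
    and "0 < K" "0 < b" "0 < T"
    and "\<forall>y\<in>{0..b}. 0 \<le> U y"
    and "2 \<le> M" "1 \<le> N" "0 < \<tau>" "real N * \<tau> \<le> T"
    and "\<forall>t\<in>{0..T}. G 0 t = 0 \<and> G b t = 0"
    and "\<forall>i\<le>M. Gh i 0 = G (grid_x b M i) 0"
    and "\<forall>n\<in>{1..N}. Gh 0 n = 0 \<and> Gh M n = 0"
    and "\<forall>i\<in>{1..M-1}. \<forall>n\<in>{1..N}.
           scheme_L \<gamma> \<alpha> lam \<rho> \<eta> K b M \<tau> U Gh i n
             = scheme_R \<gamma> lam \<rho> \<eta> b M \<tau> U f (\<lambda>j. Gh j 0) i n"
    and "0 < C\<^sub>G"
    and "\<forall>i\<in>{1..M-1}. \<forall>n\<in>{1..N}.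
           cmod (scheme_L \<gamma> \<alpha> lam \<rho> \<eta> K b M \<tau> U (\<lambda>j m. G (grid_x b M j) (real m * \<tau>)) i n
                 - scheme_R \<gamma> lam \<rho> \<eta> b M \<tau> U f (\<lambda>j. G (grid_x b M j) 0) i n)
             \<le> C\<^sub>G * (\<tau>\<^sup>2 + (b / real M)\<^sup>2)"
  shows "\<tau> * (\<Sum>n=1..N. grid_norm b M (\<lambda>i. G (grid_x b M i) (real n * \<tau>) - Gh i n))
           \<le> C\<^sub>G * \<bar>Gamma (1 - \<alpha>)\<bar> * b powr (\<alpha> + 1/2) * T / (2 * kappa K \<alpha>)
               * (\<tau>\<^sup>2 + (b / real M)\<^sup>2)"
proof -
  note A = assms
  define e where "e = (\<lambda>i n. G (grid_x b M i) (real n * \<tau>) - Gh i n)"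
  define \<delta> where "\<delta> = C\<^sub>G * (\<tau>\<^sup>2 + (b / real M)\<^sup>2)"
  have grid: "grid_x b M i \<in> {0..b}" if "i \<le> M" for i
    using that A(8,11) by (auto simp: grid_x_def field_simps)
  have boundary: "e 0 n = 0 \<and> e M n = 0" if "n \<in> {1..N}" for n
  proof -
    have "real n * \<tau> \<le> real N * \<tau>" using that A(13) by (intro mult_right_mono) auto
    then have "real n * \<tau> \<le> T" using A(14) by linarith
    then have "real n * \<tau> \<in> {0..T}" using A(13) by simp
    then show ?thesis using that A(11,15,17) by (simp add: e_def grid_x_def)
  qed
  have residual: "norm (scheme_L \<gamma> \<alpha> lam \<rho> \<eta> K b M \<tau> U e i n) \<le> \<delta>"
    if "i \<in> {1..M-1}" "n \<in> {1..N}" for i n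
  proof -
    have "scheme_L \<gamma> \<alpha> lam \<rho> \<eta> K b M \<tau> U e i n
        = scheme_L \<gamma> \<alpha> lam \<rho> \<eta> K b M \<tau> U (\<lambda>j m. G (grid_x b M j) (real m * \<tau>)) i n
          - scheme_R \<gamma> lam \<rho> \<eta> b M \<tau> U f (\<lambda>j. G (grid_x b M j) 0) i n"
      using that A(16,18) unfolding e_def scheme_L_diff[symmetric] by (auto simp: scheme_R_def)
    then show ?thesis using that A(20) by (simp add: \<delta>_def)
  qed
  have "(\<Sum>n=1..N. sqrt (\<Sum>i=1..M-1. (norm (e i n))\<^sup>2))
      \<le> real N * sqrt (real (M - 1)) * (\<delta> * \<bar>Gamma (1 - \<alpha>)\<bar> * b powr \<alpha> / (2 * kappa K \<alpha>))"
    using A grid boundary residual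
    by (intro scheme_stability[where \<gamma> = \<gamma> and lam = lam and \<rho> = \<rho> and \<tau> = \<tau> and U = U
          and \<eta> = \<eta>]) (auto simp: e_def \<delta>_def)
  then have "\<tau> * (\<Sum>n=1..N. grid_norm b M (\<lambda>i. e i n))
      \<le> T * sqrt b * (\<delta> * \<bar>Gamma (1 - \<alpha>)\<bar> * b powr \<alpha> / (2 * kappa K \<alpha>))"
    using A kappa_pos[of \<alpha> K] by (intro time_sum_grid_norm_le) (auto simp: \<delta>_def)
  moreover have "b powr (\<alpha> + 1/2) = b powr \<alpha> * sqrt b"
    using A(8) by (simp add: powr_add powr_half_sqrt)
  ultimately show ?thesis by (simp add: e_def \<delta>_def field_simps)
qed

end
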